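(* The functor $CC:\mathcal{ESP}\to\mathcal{ESP}$ preserves pullbacks.
   Context: $\mathcal{ESP}$ is the category of event structures with polarities (esps) and total maps: an event structure $(E,\le,\mathrm{Con})$ has a partial order with finite down-sets $[e]$ and a consistency relation of finite sets (closed under subsets, containing singletons, closed under adding causes); configurations are finite consistent down-closed sets; a map is a polarity-preserving function sending configurations to configurations and injective on each configuration. $A^\perp$ reverses polarities, $A\parallel B$ is the disjoint union $\{1\}\times A\cup\{2\}\times B$. For an esp $A$, $CC_A$ has the events of $A^\perp\parallel A$ with their polarities; for $c=(i,a)$ let $\bar c=(3-i,a)$; the causal order of $CC_A$ is the transitive closure of $\le_{A^\perp\parallel A}\cup\{(\bar c,c)\mid c\text{ positive in }A^\perp\parallel A\}$, and a finite set is consistent iff its down-closure is consistent in $A^\perp\parallel A$. For a map $f:A\to B$, $CC_f:CC_A\to CC_B$ sends $(i,a)$ to $(i,f(a))$; this defines a functor $CC$. *)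

theory Defs
  imports Main
begin

text \<open>Event structures with polarities. Events of type 'a; the carrier is ev.
  Polarity: True = positive, False = negative.\<close>

record 'a esp =
  ev  :: "'a set"
  leq :: "'a \<Rightarrow> 'a \<Rightarrow> bool"
  con :: "'a set set"
  pol :: "'a \<Rightarrow> bool"

definition es :: "'a esp \<Rightarrow> bool" where
  "es E \<longleftrightarrow>
     (\<forall>x y. leq E x y \<longrightarrow> x \<in> ev E \<and> y \<in> ev E) \<and>
     (\<forall>x\<in>ev E. leq E x x) \<and>
     (\<forall>x y. leq E x y \<and> leq E y x \<longrightarrow> x = y) \<and>
     (\<forall>x y z. leq E x y \<and> leq E y z \<longrightarrow> leq E x z) \<and>
     (\<forall>e\<in>ev E. finite {e'. leq E e' e}) \<and>
     (\<forall>X\<in>con E. finite X \<and> X \<subseteq> ev E) \<and>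
     {} \<in> con E \<and>
     (\<forall>X Y. X \<in> con E \<and> Y \<subseteq> X \<longrightarrow> Y \<in> con E) \<and>
     (\<forall>e\<in>ev E. {e} \<in> con E) \<and>
     (\<forall>X e e'. X \<in> con E \<and> e \<in> X \<and> leq E e' e \<longrightarrow> insert e' X \<in> con E)"

definition config :: "'a esp \<Rightarrow> 'a set \<Rightarrow> bool" where
  "config E x \<longleftrightarrow> finite x \<and> x \<subseteq> ev E \<and> x \<in> con E \<and>
     (\<forall>e\<in>x. \<forall>e'. leq E e' e \<longrightarrow> e' \<in> x)"

definition esp_map :: "'a esp \<Rightarrow> 'b esp \<Rightarrow> ('a \<Rightarrow> 'b) \<Rightarrow> bool" where
  "esp_map A B f \<longleftrightarrow>
     (\<forall>e\<in>ev A. f e \<in> ev B \<and> pol B (f e) = pol A e) \<and>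
     (\<forall>x. config A x \<longrightarrow> config B (f ` x) \<and> inj_on f x)"

definition dual :: "'a esp \<Rightarrow> 'a esp" where
  "dual A = A\<lparr>pol := (\<lambda>e. \<not> pol A e)\<rparr>"

definition par :: "'a esp \<Rightarrow> 'a esp \<Rightarrow> (nat \<times> 'a) esp" where
  "par A B = \<lparr> ev = ({1} \<times> ev A) \<union> ({2} \<times> ev B),
     leq = (\<lambda>(i,a) (j,b). i = j \<and> ((i = 1 \<and> leq A a b) \<or> (i = 2 \<and> leq B a b))),
     con = {X. X \<subseteq> ({1} \<times> ev A) \<union> ({2} \<times> ev B) \<and>
               {a. (1,a) \<in> X} \<in> con A \<and> {b. (2,b) \<in> X} \<in> con B},
     pol = (\<lambda>(i,a). if i = 1 then pol A a else pol B a) \<rparr>"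

definition bar :: "nat \<times> 'a \<Rightarrow> nat \<times> 'a" where
  "bar c = (3 - fst c, snd c)"

definition CC :: "'a esp \<Rightarrow> (nat \<times> 'a) esp" where
  "CC A = (let S = par (dual A) A;
               R = (\<lambda>c d. leq S c d \<or> (d \<in> ev S \<and> pol S d \<and> c = bar d));
               L = tranclp R
           in \<lparr> ev = ev S,
                leq = L,
                con = {X. finite X \<and> X \<subseteq> ev S \<and> {c. \<exists>d\<in>X. L c d} \<in> con S},
                pol = pol S \<rparr>)"

definition CCmap :: "('a \<Rightarrow> 'b) \<Rightarrow> nat \<times> 'a \<Rightarrow> nat \<times> 'b" where
  "CCmap f = (\<lambda>(i,a). (i, f a))"

text \<open>Pullback of f : A \<rightarrow> C, g : B \<rightarrow> C in ESP, with the universal property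
  tested against all esps whose events have type 'q.\<close>
definition is_pullback ::
  "'q itself \<Rightarrow> 'a esp \<Rightarrow> 'b esp \<Rightarrow> 'c esp \<Rightarrow> ('a \<Rightarrow> 'c) \<Rightarrow> ('b \<Rightarrow> 'c)
     \<Rightarrow> 'p esp \<Rightarrow> ('p \<Rightarrow> 'a) \<Rightarrow> ('p \<Rightarrow> 'b) \<Rightarrow> bool" where
  "is_pullback _ A B C f g P p1 p2 \<longleftrightarrow>
     es P \<and> esp_map P A p1 \<and> esp_map P B p2 \<and> (\<forall>e\<in>ev P. f (p1 e) = g (p2 e)) \<and>
     (\<forall>(Q :: 'q esp) q1 q2.
        es Q \<and> esp_map Q A q1 \<and> esp_map Q B q2 \<and> (\<forall>e\<in>ev Q. f (q1 e) = g (q2 e)) \<longrightarrow>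
        (\<exists>h. esp_map Q P h \<and> (\<forall>e\<in>ev Q. p1 (h e) = q1 e \<and> p2 (h e) = q2 e) \<and>
             (\<forall>h'. esp_map Q P h' \<and> (\<forall>e\<in>ev Q. p1 (h' e) = q1 e \<and> p2 (h' e) = q2 e)
                   \<longrightarrow> (\<forall>e\<in>ev Q. h' e = h e))))"

end

theory Submission
  imports Defs
begin

text \<open>A cone over CC A and CC B splits into the events sent to side 1 and those sent to
  side 2. Each part is a cone over A and B, hence factors uniquely through P, and the two
  factorisations glue to the mediating map into CC P. The only real work is to show that this
  map sends configurations to configurations of CC P, i.e. respects the links between the two
  sides. This rests on a property of pullbacks obtained from the universal property alone: an
  event of a configuration w of P whose projections lie in those of another configuration w'
  belongs to w', provided f and g do not identify events across the two. To prove it, one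
  shows that causality in P is generated by links visible in A or in B, and that an event of
  P is determined by its projections together with its strict history.\<close>

section \<open>Event structures\<close>

lemma es_leq_ev:
  assumes "es E" "leq E x y" shows "x \<in> ev E" "y \<in> ev E"
  using assms unfolding es_def by meson+

lemma es_refl: "es E \<Longrightarrow> x \<in> ev E \<Longrightarrow> leq E x x"
  unfolding es_def by meson

lemma es_antisym: "es E \<Longrightarrow> leq E x y \<Longrightarrow> leq E y x \<Longrightarrow> x = y"
  unfolding es_def by meson

lemma es_trans: "es E \<Longrightarrow> leq E x y \<Longrightarrow> leq E y z \<Longrightarrow> leq E x z"
  unfolding es_def by meson

lemma es_finite_causes: "es E \<Longrightarrow> e \<in> ev E \<Longrightarrow> finite {e'. leq E e' e}"
  unfolding es_def by meson

lemma es_con_finite: "es E \<Longrightarrow> X \<in> con E \<Longrightarrow> finite X"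
  unfolding es_def by meson

lemma es_con_ev: "es E \<Longrightarrow> X \<in> con E \<Longrightarrow> X \<subseteq> ev E"
  unfolding es_def by meson

lemma es_con_empty: "es E \<Longrightarrow> {} \<in> con E"
  unfolding es_def by meson

lemma es_con_subset: "es E \<Longrightarrow> X \<in> con E \<Longrightarrow> Y \<subseteq> X \<Longrightarrow> Y \<in> con E"
  unfolding es_def by meson

lemma es_con_singleton: "es E \<Longrightarrow> e \<in> ev E \<Longrightarrow> {e} \<in> con E"
  unfolding es_def by meson

lemma es_con_insert_cause:
  "es E \<Longrightarrow> X \<in> con E \<Longrightarrow> e \<in> X \<Longrightarrow> leq E e' e \<Longrightarrow> insert e' X \<in> con E"
  unfolding es_def by meson

lemma esI:
  assumes "\<And>x y. leq E x y \<Longrightarrow> x \<in> ev E \<and> y \<in> ev E"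
    and "\<And>x. x \<in> ev E \<Longrightarrow> leq E x x"
    and "\<And>x y. leq E x y \<Longrightarrow> leq E y x \<Longrightarrow> x = y"
    and "\<And>x y z. leq E x y \<Longrightarrow> leq E y z \<Longrightarrow> leq E x z"
    and "\<And>e. e \<in> ev E \<Longrightarrow> finite {e'. leq E e' e}"
    and "\<And>X. X \<in> con E \<Longrightarrow> finite X \<and> X \<subseteq> ev E"
    and "{} \<in> con E"
    and "\<And>X Y. X \<in> con E \<Longrightarrow> Y \<subseteq> X \<Longrightarrow> Y \<in> con E"
    and "\<And>e. e \<in> ev E \<Longrightarrow> {e} \<in> con E"
    and "\<And>X e e'. X \<in> con E \<Longrightarrow> e \<in> X \<Longrightarrow> leq E e' e \<Longrightarrow> insert e' X \<in> con E"
  shows "es E"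
  unfolding es_def by (intro conjI; (intro allI ballI impI)?; (elim conjE)?; rule assms; assumption)

lemma configD:
  assumes "config E x"
  shows "finite x" "x \<subseteq> ev E" "x \<in> con E" "\<And>e e'. e \<in> x \<Longrightarrow> leq E e' e \<Longrightarrow> e' \<in> x"
  using assms unfolding config_def by auto

lemma configI:
  assumes "finite x" "x \<subseteq> ev E" "x \<in> con E" "\<And>e e'. e \<in> x \<Longrightarrow> leq E e' e \<Longrightarrow> e' \<in> x"
  shows "config E x"
  using assms unfolding config_def by auto

lemma esp_mapD:
  assumes "esp_map A B f"
  shows "\<And>e. e \<in> ev A \<Longrightarrow> f e \<in> ev B" "\<And>e. e \<in> ev A \<Longrightarrow> pol B (f e) = pol A e"
    "\<And>x. config A x \<Longrightarrow> config B (f ` x)" "\<And>x. config A x \<Longrightarrow> inj_on f x"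
  using assms unfolding esp_map_def by blast+

definition down_closure :: "'a esp \<Rightarrow> 'a set \<Rightarrow> 'a set" where
  "down_closure E X = {e'. \<exists>e\<in>X. leq E e' e}"

definition hist :: "'a esp \<Rightarrow> 'a \<Rightarrow> 'a set" where
  "hist E e = {e'. leq E e' e}"

definition strict_hist :: "'a esp \<Rightarrow> 'a \<Rightarrow> 'a set" where
  "strict_hist E e = hist E e - {e}"

lemma con_union_causes:
  assumes "es E" "X \<in> con E" "finite Y" "Y \<subseteq> down_closure E X"
  shows "X \<union> Y \<in> con E"
  using assms(3,4)
proof (induction Y rule: finite_induct)
  case empty
  then show ?case using assms(2) by simp
next
  case (insert y Y)
  then obtain e where "e \<in> X" "leq E y e" unfolding down_closure_def by blast
  then have "insert y (X \<union> Y) \<in> con E"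
    using es_con_insert_cause[OF assms(1)] insert by blast
  then show ?case by simp
qed

lemma config_down_closure:
  assumes "es E" "X \<in> con E"
  shows "config E (down_closure E X)"
proof -
  have X: "finite X" "X \<subseteq> ev E" using es_con_finite[OF assms] es_con_ev[OF assms] .
  have "down_closure E X = (\<Union>e\<in>X. {e'. leq E e' e})" unfolding down_closure_def by blast
  then have fin: "finite (down_closure E X)" using X es_finite_causes[OF assms(1)] by auto
  have "X \<subseteq> down_closure E X" unfolding down_closure_def using X es_refl[OF assms(1)] by blast
  then have "down_closure E X \<in> con E"
    using con_union_causes[OF assms fin] by (simp add: Un_absorb1)
  moreover have "e' \<in> down_closure E X" if "e \<in> down_closure E X" "leq E e' e" for e e'
    using that es_trans[OF assms(1)] unfolding down_closure_def by blast
  ultimately show ?thesis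
    using fin es_con_ev[OF assms(1)] by (blast intro: configI)
qed

lemma hist_config:
  assumes "es E" "e \<in> ev E"
  shows "config E (hist E e)"
proof -
  have "down_closure E {e} = hist E e" unfolding down_closure_def hist_def by auto
  then show ?thesis using config_down_closure[OF assms(1) es_con_singleton[OF assms]] by simp
qed

lemma hist_subset_config: "config E x \<Longrightarrow> e \<in> x \<Longrightarrow> hist E e \<subseteq> x"
  unfolding config_def hist_def by blast

lemma hist_self: "es E \<Longrightarrow> e \<in> ev E \<Longrightarrow> e \<in> hist E e"
  unfolding hist_def by (rule CollectI, rule es_refl)

lemma hist_subset_ev: "es E \<Longrightarrow> hist E e \<subseteq> ev E"
  unfolding hist_def by (auto dest: es_leq_ev(1))

lemma hist_subset_hist: "es E \<Longrightarrow> r \<in> hist E e \<Longrightarrow> hist E r \<subseteq> hist E e"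
  unfolding hist_def by (blast intro: es_trans)

lemma finite_hist: "es E \<Longrightarrow> e \<in> ev E \<Longrightarrow> finite (hist E e)"
  unfolding hist_def by (rule es_finite_causes)

lemma hist_insert_strict_hist: "es E \<Longrightarrow> e \<in> ev E \<Longrightarrow> hist E e = insert e (strict_hist E e)"
  using hist_self[of E e] unfolding strict_hist_def by auto

lemma es_causal_induct [consumes 2, case_names step]:
  assumes "es E" "e \<in> ev E"
    and step: "\<And>e. e \<in> ev E \<Longrightarrow> (\<And>r. r \<in> strict_hist E e \<Longrightarrow> Q r) \<Longrightarrow> Q e"
  shows "Q e"
proof -
  have "\<forall>e. card (hist E e) = n \<longrightarrow> e \<in> ev E \<longrightarrow> Q e" for n
  proof (induction n rule: less_induct)
    case (less n)
    show ?case
    proof (intro allI impI)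
      fix e assume n: "card (hist E e) = n" and e: "e \<in> ev E"
      show "Q e"
      proof (rule step[OF e])
        fix r assume r: "r \<in> strict_hist E e"
        then have "r \<in> hist E e" "r \<noteq> e" unfolding strict_hist_def by auto
        then have "hist E r \<subset> hist E e"
          using hist_subset_hist[OF assms(1)] hist_self[OF assms(1) e] es_antisym[OF assms(1)]
          unfolding hist_def by blast
        then have "card (hist E r) < n" using n finite_hist[OF assms(1) e] psubset_card_mono by blast
        moreover have "r \<in> ev E" using \<open>r \<in> hist E e\<close> hist_subset_ev[OF assms(1)] by blast
        ultimately show "Q r" using less by blast
      qed
    qed
  qed
  then show ?thesis using assms(2) by blast
qed

section \<open>Sub-esps, relabelling and pullbacks\<close>

definition subesp :: "'a esp \<Rightarrow> 'a set \<Rightarrow> ('a \<Rightarrow> bool) \<Rightarrow> 'a esp" where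
  "subesp E S pl = \<lparr>ev = ev E \<inter> S, leq = (\<lambda>x y. leq E x y \<and> x \<in> S \<and> y \<in> S),
     con = {X \<in> con E. X \<subseteq> S}, pol = pl\<rparr>"

lemma subesp_simps [simp]:
  "ev (subesp E S pl) = ev E \<inter> S"
  "leq (subesp E S pl) x y = (leq E x y \<and> x \<in> S \<and> y \<in> S)"
  "con (subesp E S pl) = {X \<in> con E. X \<subseteq> S}"
  "pol (subesp E S pl) = pl"
  unfolding subesp_def by simp_all

lemma es_subesp:
  assumes "es E" shows "es (subesp E S pl)"
proof (rule esI)
  fix e assume "e \<in> ev (subesp E S pl)"
  then have "finite {e'. leq E e' e}" using es_finite_causes[OF assms] by simp
  then show "finite {e'. leq (subesp E S pl) e' e}" by (rule rev_finite_subset) auto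
next
  show "leq (subesp E S pl) x y \<Longrightarrow> leq (subesp E S pl) y z \<Longrightarrow> leq (subesp E S pl) x z"
    for x y z using es_trans[OF assms, of x y z] by simp
next
  show "X \<in> con (subesp E S pl) \<Longrightarrow> e \<in> X \<Longrightarrow> leq (subesp E S pl) e' e \<Longrightarrow>
      insert e' X \<in> con (subesp E S pl)" for X e e'
    using es_con_insert_cause[OF assms, of X e e'] by simp
qed (use es_leq_ev[OF assms] es_refl[OF assms] es_antisym[OF assms] es_con_finite[OF assms]
       es_con_ev[OF assms] es_con_empty[OF assms] es_con_subset[OF assms]
       es_con_singleton[OF assms]
     in \<open>auto\<close>)

lemma config_subesp:
  "config (subesp E S pl) x \<longleftrightarrow> finite x \<and> x \<subseteq> ev E \<and> x \<subseteq> S \<and> x \<in> con E \<and>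
     (\<forall>e\<in>x. \<forall>e'. leq E e' e \<and> e' \<in> S \<longrightarrow> e' \<in> x)"
  unfolding config_def by auto

lemma config_subesp_down_closed:
  assumes "\<forall>e\<in>S. \<forall>e'. leq E e' e \<longrightarrow> e' \<in> S"
  shows "config (subesp E S pl) x \<longleftrightarrow> config E x \<and> x \<subseteq> S"
  unfolding config_subesp using assms unfolding config_def by blast

lemma esp_map_subesp:
  assumes "esp_map E Z u" "\<forall>e\<in>S. \<forall>e'. leq E e' e \<longrightarrow> e' \<in> S"
  shows "esp_map (subesp E S (pol E)) Z u"
  using assms config_subesp_down_closed[OF assms(2)] unfolding esp_map_def by auto

text \<open>The universal property of a pullback only quantifies over esps on the event type 'q;
  relabelling along an injection makes it available for test esps on any other event type.\<close>

definition relabel :: "('r \<Rightarrow> 'q) \<Rightarrow> 'r esp \<Rightarrow> 'q esp" where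
  "relabel j T = \<lparr>ev = j ` ev T,
     leq = (\<lambda>x y. x \<in> j ` ev T \<and> y \<in> j ` ev T \<and> leq T (inv_into (ev T) j x) (inv_into (ev T) j y)),
     con = {X. X \<subseteq> j ` ev T \<and> inv_into (ev T) j ` X \<in> con T},
     pol = (\<lambda>x. pol T (inv_into (ev T) j x))\<rparr>"

lemma relabel_simps [simp]:
  "ev (relabel j T) = j ` ev T"
  "leq (relabel j T) x y = (x \<in> j ` ev T \<and> y \<in> j ` ev T \<and>
     leq T (inv_into (ev T) j x) (inv_into (ev T) j y))"
  "con (relabel j T) = {X. X \<subseteq> j ` ev T \<and> inv_into (ev T) j ` X \<in> con T}"
  "pol (relabel j T) = (\<lambda>x. pol T (inv_into (ev T) j x))"
  unfolding relabel_def by simp_all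

lemma es_relabel:
  assumes "es T" "inj_on j (ev T)"
  shows "es (relabel j T)"
proof (rule esI)
  let ?k = "inv_into (ev T) j"
  show "leq (relabel j T) x y \<Longrightarrow> leq (relabel j T) y x \<Longrightarrow> x = y" for x y
    using es_antisym[OF assms(1)] by simp (metis f_inv_into_f)
  show "leq (relabel j T) x y \<Longrightarrow> leq (relabel j T) y z \<Longrightarrow> leq (relabel j T) x z" for x y z
    using es_trans[OF assms(1)] by simp blast
  show "finite {e'. leq (relabel j T) e' e}" if "e \<in> ev (relabel j T)" for e
  proof (rule finite_subset)
    show "{e'. leq (relabel j T) e' e} \<subseteq> j ` {e'. leq T e' (?k e)}"
      using assms(2) by (auto simp: f_inv_into_f image_iff)
    show "finite (j ` {e'. leq T e' (?k e)})"
      using that es_finite_causes[OF assms(1)] by (simp add: inv_into_into)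
  qed
  show "finite X \<and> X \<subseteq> ev (relabel j T)" if "X \<in> con (relabel j T)" for X
  proof -
    have X: "X \<subseteq> j ` ev T" "?k ` X \<in> con T" using that by auto
    then have "finite (?k ` X)" using es_con_finite[OF assms(1)] by blast
    then show ?thesis using X finite_imageD inj_on_inv_into[OF X(1)] by auto
  qed
  show "X \<in> con (relabel j T) \<Longrightarrow> e \<in> X \<Longrightarrow> leq (relabel j T) e' e \<Longrightarrow>
      insert e' X \<in> con (relabel j T)" for X e e'
    using es_con_insert_cause[OF assms(1), of "?k ` X" "?k e" "?k e'"] by simp
  show "X \<in> con (relabel j T) \<Longrightarrow> Y \<subseteq> X \<Longrightarrow> Y \<in> con (relabel j T)" for X Y
    using es_con_subset[OF assms(1), of "?k ` X" "?k ` Y"] by auto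
qed (use es_refl[OF assms(1)] es_con_empty[OF assms(1)] es_con_singleton[OF assms(1)]
     in \<open>auto simp: inv_into_into\<close>)

lemma config_relabel:
  assumes "es T" "inj_on j (ev T)"
  shows "config (relabel j T) X \<longleftrightarrow> X \<subseteq> j ` ev T \<and> config T (inv_into (ev T) j ` X)"
proof
  let ?k = "inv_into (ev T) j"
  assume c: "config (relabel j T) X"
  then have X: "X \<subseteq> j ` ev T" "finite X" "?k ` X \<in> con T" unfolding config_def by auto
  have "?k ` X \<subseteq> ev T" using X(1) by (auto simp: inv_into_into)
  moreover have "e' \<in> ?k ` X" if e: "e \<in> ?k ` X" "leq T e' e" for e e'
  proof -
    obtain x where x: "x \<in> X" "e = ?k x" using e(1) by blast
    have e'ev: "e' \<in> ev T" using es_leq_ev(1)[OF assms(1) e(2)] .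
    have kk: "?k (j e') = e'" using inv_into_f_f[OF assms(2) e'ev] .
    have "leq (relabel j T) (j e') x" using kk x e(2) X(1) e'ev by auto
    then have "j e' \<in> X" using configD(4)[OF c x(1)] by blast
    then show "e' \<in> ?k ` X" using kk by (metis imageI)
  qed
  ultimately show "X \<subseteq> j ` ev T \<and> config T (?k ` X)"
    using X unfolding config_def by blast
next
  let ?k = "inv_into (ev T) j"
  assume "X \<subseteq> j ` ev T \<and> config T (?k ` X)"
  then have X: "X \<subseteq> j ` ev T" "config T (?k ` X)" by auto
  have "e' \<in> X" if e: "e \<in> X" "leq (relabel j T) e' e" for e e'
  proof -
    have "?k e' \<in> ?k ` X" using e X(2) unfolding config_def by auto
    then obtain x where "x \<in> X" "?k e' = ?k x" by blast
    moreover have "inj_on ?k (insert e' X)" using e(2) X(1) by (intro inj_on_inv_into) auto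
    ultimately show "e' \<in> X" by (auto dest: inj_onD)
  qed
  then show "config (relabel j T) X"
    using X finite_imageD[OF configD(1)[OF X(2)] inj_on_inv_into[OF X(1)]] configD(3)[OF X(2)]
    by (intro configI) auto
qed

lemma config_relabel_image:
  assumes "es T" "inj_on j (ev T)" "config T x"
  shows "config (relabel j T) (j ` x)"
proof -
  have "x \<subseteq> ev T" using configD(2)[OF assms(3)] .
  then have "inv_into (ev T) j ` j ` x = x"
    using assms(2) by (force simp: inv_into_f_f image_iff subset_iff)
  then show ?thesis using config_relabel[OF assms(1,2)] assms(3) \<open>x \<subseteq> ev T\<close> by auto
qed

lemma esp_map_from_relabel:
  assumes "es T" "inj_on j (ev T)" "esp_map T Z u"
  shows "esp_map (relabel j T) Z (u \<circ> inv_into (ev T) j)"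
  unfolding esp_map_def
proof (intro conjI ballI allI impI)
  let ?k = "inv_into (ev T) j"
  fix e assume "e \<in> ev (relabel j T)"
  then have "?k e \<in> ev T" by (simp add: inv_into_into)
  then show "(u \<circ> ?k) e \<in> ev Z" "pol Z ((u \<circ> ?k) e) = pol (relabel j T) e"
    using esp_mapD(1,2)[OF assms(3)] by simp_all
next
  let ?k = "inv_into (ev T) j"
  fix x assume "config (relabel j T) x"
  then have x: "x \<subseteq> j ` ev T" "config T (?k ` x)" using config_relabel[OF assms(1,2)] by auto
  show "config Z ((u \<circ> ?k) ` x)" using esp_mapD(3)[OF assms(3) x(2)] by (simp add: image_comp)
  show "inj_on (u \<circ> ?k) x"
    using esp_mapD(4)[OF assms(3) x(2)] inj_on_inv_into[OF x(1)] comp_inj_on by blast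
qed

lemma esp_map_to_relabel:
  assumes "es T" "inj_on j (ev T)" "esp_map (relabel j T) Z v"
  shows "esp_map T Z (v \<circ> j)"
  unfolding esp_map_def
proof (intro conjI ballI allI impI)
  fix e assume e: "e \<in> ev T"
  then have "j e \<in> ev (relabel j T)" by simp
  then show "(v \<circ> j) e \<in> ev Z" "pol Z ((v \<circ> j) e) = pol T e"
    using esp_mapD(1,2)[OF assms(3)] inv_into_f_f[OF assms(2) e] by simp_all
next
  fix x assume x: "config T x"
  then have c: "config (relabel j T) (j ` x)" using config_relabel_image[OF assms(1,2)] by blast
  show "config Z ((v \<circ> j) ` x)" using esp_mapD(3)[OF assms(3) c] by (simp add: image_comp)
  have "x \<subseteq> ev T" using configD(2)[OF x] .
  then show "inj_on (v \<circ> j) x"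
    using esp_mapD(4)[OF assms(3) c] comp_inj_on assms(2) inj_on_subset by blast
qed

lemma is_pullbackD:
  assumes "is_pullback TYPE('q) A B C f g P p1 p2"
  shows "es P" "esp_map P A p1" "esp_map P B p2" "\<And>e. e \<in> ev P \<Longrightarrow> f (p1 e) = g (p2 e)"
  using assms unfolding is_pullback_def by blast+

lemma is_pullback_universal:
  assumes "is_pullback TYPE('q) A B C f g P p1 p2"
    and "es (Q :: 'q esp)" "esp_map Q A q1" "esp_map Q B q2" "\<forall>e\<in>ev Q. f (q1 e) = g (q2 e)"
  shows "\<exists>h. esp_map Q P h \<and> (\<forall>e\<in>ev Q. p1 (h e) = q1 e \<and> p2 (h e) = q2 e) \<and>
           (\<forall>h'. esp_map Q P h' \<and> (\<forall>e\<in>ev Q. p1 (h' e) = q1 e \<and> p2 (h' e) = q2 e)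
                 \<longrightarrow> (\<forall>e\<in>ev Q. h' e = h e))"
  using assms unfolding is_pullback_def by blast

lemma cone_relabel:
  assumes "es T" "inj_on j (ev T)" "esp_map T A t1" "esp_map T B t2"
    and "\<forall>e\<in>ev T. f (t1 e) = g (t2 e)"
  shows "es (relabel j T)" "esp_map (relabel j T) A (t1 \<circ> inv_into (ev T) j)"
    "esp_map (relabel j T) B (t2 \<circ> inv_into (ev T) j)"
    "\<forall>e\<in>ev (relabel j T). f ((t1 \<circ> inv_into (ev T) j) e) = g ((t2 \<circ> inv_into (ev T) j) e)"
  using es_relabel[OF assms(1,2)] esp_map_from_relabel[OF assms(1,2)] assms(3-5)
  by (auto simp: inv_into_into)

lemma pullback_mediator_exists:
  fixes T :: "'r esp" and j :: "'r \<Rightarrow> 'q"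
  assumes pb: "is_pullback TYPE('q) A B C f g P p1 p2"
    and T: "es T" "inj_on j (ev T)" "esp_map T A t1" "esp_map T B t2"
      "\<forall>e\<in>ev T. f (t1 e) = g (t2 e)"
  shows "\<exists>h. esp_map T P h \<and> (\<forall>e\<in>ev T. p1 (h e) = t1 e \<and> p2 (h e) = t2 e)"
proof -
  let ?k = "inv_into (ev T) j"
  obtain h where h: "esp_map (relabel j T) P h"
    "\<forall>e\<in>ev (relabel j T). p1 (h e) = (t1 \<circ> ?k) e \<and> p2 (h e) = (t2 \<circ> ?k) e"
    using is_pullback_universal[OF pb cone_relabel[OF T]] by blast
  have "esp_map T P (h \<circ> j)" using esp_map_to_relabel[OF T(1,2) h(1)] .
  moreover have "\<forall>e\<in>ev T. p1 ((h \<circ> j) e) = t1 e \<and> p2 ((h \<circ> j) e) = t2 e"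
    using h(2) inv_into_f_f[OF T(2)] by simp
  ultimately show ?thesis by blast
qed

lemma pullback_mediator_unique:
  fixes T :: "'r esp" and j :: "'r \<Rightarrow> 'q"
  assumes pb: "is_pullback TYPE('q) A B C f g P p1 p2"
    and T: "es T" "inj_on j (ev T)" "esp_map T A t1" "esp_map T B t2"
      "\<forall>e\<in>ev T. f (t1 e) = g (t2 e)"
    and h1: "esp_map T P h1" "\<forall>e\<in>ev T. p1 (h1 e) = t1 e \<and> p2 (h1 e) = t2 e"
    and h2: "esp_map T P h2" "\<forall>e\<in>ev T. p1 (h2 e) = t1 e \<and> p2 (h2 e) = t2 e"
    and e: "e \<in> ev T"
  shows "h1 e = h2 e"
proof -
  let ?k = "inv_into (ev T) j"
  obtain h where h:
    "\<And>h'. esp_map (relabel j T) P h' \<Longrightarrow>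
       \<forall>e\<in>ev (relabel j T). p1 (h' e) = (t1 \<circ> ?k) e \<and> p2 (h' e) = (t2 \<circ> ?k) e \<Longrightarrow>
       \<forall>e\<in>ev (relabel j T). h' e = h e"
    using is_pullback_universal[OF pb cone_relabel[OF T]] by blast
  have "(h1 \<circ> ?k) (j e) = h (j e)" "(h2 \<circ> ?k) (j e) = h (j e)"
    using h[of "h1 \<circ> ?k"] h[of "h2 \<circ> ?k"] esp_map_from_relabel[OF T(1,2)] h1 h2 e
    by (auto simp: inv_into_into)
  then show ?thesis using inv_into_f_f[OF T(2) e] by simp
qed

section \<open>The functor CC\<close>

definition side :: "nat \<Rightarrow> (nat \<times> 'a) set \<Rightarrow> 'a set" where
  "side i Y = {a. (i, a) \<in> Y}"

lemma side_iff [simp]: "a \<in> side i Y \<longleftrightarrow> (i, a) \<in> Y"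
  unfolding side_def by simp

lemma bar_simps [simp]: "bar (Suc 0, a) = (2, a)" "bar (2, a) = (1, a)"
  unfolding bar_def by simp_all

lemma CCmap_simp [simp]: "CCmap f (i, a) = (i, f a)"
  unfolding CCmap_def by simp

lemma par_dual_self:
  "ev (par (dual X) X) = {1,2} \<times> ev X"
  "leq (par (dual X) X) c d \<longleftrightarrow> fst c = fst d \<and> fst c \<in> {1,2} \<and> leq X (snd c) (snd d)"
  "con (par (dual X) X) = {Y. Y \<subseteq> {1,2} \<times> ev X \<and> side 1 Y \<in> con X \<and> side 2 Y \<in> con X}"
  "pol (par (dual X) X) = (\<lambda>(i, a). if i = 1 then \<not> pol X a else pol X a)"
  unfolding par_def dual_def side_def by (auto split: prod.splits)

definition CC_gen :: "'a esp \<Rightarrow> nat \<times> 'a \<Rightarrow> nat \<times> 'a \<Rightarrow> bool" where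
  "CC_gen X c d \<longleftrightarrow> (fst c = fst d \<and> fst c \<in> {1,2} \<and> leq X (snd c) (snd d)) \<or>
     (d \<in> {1,2} \<times> ev X \<and> (if fst d = 1 then \<not> pol X (snd d) else pol X (snd d)) \<and> c = bar d)"

lemma ev_CC: "ev (CC X) = {1,2} \<times> ev X"
  and leq_CC: "leq (CC X) = tranclp (CC_gen X)"
  and pol_CC: "pol (CC X) = (\<lambda>(i, a). if i = 1 then \<not> pol X a else pol X a)"
  and con_CC: "con (CC X) = {Y. finite Y \<and> Y \<subseteq> {1,2} \<times> ev X \<and>
     down_closure (CC X) Y \<subseteq> {1,2} \<times> ev X \<and>
     side 1 (down_closure (CC X) Y) \<in> con X \<and> side 2 (down_closure (CC X) Y) \<in> con X}"
proof -
  have gen: "(\<lambda>c d. leq (par (dual X) X) c d \<or>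
      (d \<in> ev (par (dual X) X) \<and> pol (par (dual X) X) d \<and> c = bar d)) = CC_gen X"
    unfolding CC_gen_def par_dual_self by (auto simp: fun_eq_iff split: prod.splits)
  show "ev (CC X) = {1,2} \<times> ev X" "leq (CC X) = tranclp (CC_gen X)"
    "pol (CC X) = (\<lambda>(i, a). if i = 1 then \<not> pol X a else pol X a)"
    unfolding CC_def Let_def gen by (simp_all add: par_dual_self)
  then show "con (CC X) = {Y. finite Y \<and> Y \<subseteq> {1,2} \<times> ev X \<and>
     down_closure (CC X) Y \<subseteq> {1,2} \<times> ev X \<and>
     side 1 (down_closure (CC X) Y) \<in> con X \<and> side 2 (down_closure (CC X) Y) \<in> con X}"
    unfolding CC_def Let_def gen down_closure_def by (simp add: par_dual_self)
qed

lemma pol_CC_simps [simp]: "pol (CC X) (Suc 0, a) = (\<not> pol X a)" "pol (CC X) (2, a) = pol X a"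
  by (simp_all add: pol_CC)

lemma CC_gen_cases:
  assumes "CC_gen X c d"
  obtains (order) i a b where "c = (i, a)" "d = (i, b)" "i = 1 \<or> i = 2" "leq X a b"
    | (neg) a where "c = (2, a)" "d = (1, a)" "a \<in> ev X" "\<not> pol X a"
    | (pos) a where "c = (1, a)" "d = (2, a)" "a \<in> ev X" "pol X a"
  using assms unfolding CC_gen_def by (cases c; cases d) (auto split: if_splits)

lemma CC_gen_ev:
  assumes "es X" "CC_gen X c d" shows "c \<in> {1,2} \<times> ev X \<and> d \<in> {1,2} \<times> ev X"
  using assms(2)
proof (cases rule: CC_gen_cases)
  case (order i a b)
  then show ?thesis using es_leq_ev[OF assms(1) order(4)] by auto
qed auto

lemma CC_leq_ev:
  assumes "es X" "leq (CC X) c d" shows "c \<in> ev (CC X)" "d \<in> ev (CC X)"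
proof -
  have "tranclp (CC_gen X) c d" using assms(2) by (simp add: leq_CC)
  then have "c \<in> {1,2} \<times> ev X \<and> d \<in> {1,2} \<times> ev X"
    by (induction rule: tranclp.induct) (use CC_gen_ev[OF assms(1)] in blast)+
  then show "c \<in> ev (CC X)" "d \<in> ev (CC X)" by (simp_all add: ev_CC)
qed

lemma CC_gen_snd: "es X \<Longrightarrow> CC_gen X c d \<Longrightarrow> leq X (snd c) (snd d)"
  by (erule CC_gen_cases) (auto intro: es_refl)

lemma CC_leq_snd:
  assumes "es X" "leq (CC X) c d" shows "leq X (snd c) (snd d)"
proof -
  have "tranclp (CC_gen X) c d" using assms(2) by (simp add: leq_CC)
  then show ?thesis
  proof (induction rule: tranclp.induct)
    case (r_into_trancl c d)
    then show ?case by (rule CC_gen_snd[OF assms(1)])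
  next
    case (trancl_into_trancl c d d')
    then show ?case using es_trans[OF assms(1) _ CC_gen_snd[OF assms(1)]] by blast
  qed
qed

lemma CC_leq_refl:
  assumes "es X" "c \<in> ev (CC X)" shows "leq (CC X) c c"
proof -
  have "CC_gen X c c" using assms(2) es_refl[OF assms(1)] unfolding CC_gen_def by (auto simp: ev_CC)
  then show ?thesis by (simp add: leq_CC)
qed

lemma CC_leq_same_snd:
  assumes "es X" "leq (CC X) c d" "snd c = snd d"
  shows "c = d \<or> pol (CC X) d"
proof -
  have "tranclp (CC_gen X) c d" using assms(2) by (simp add: leq_CC)
  then show ?thesis using assms(3)
  proof (induction rule: tranclp.induct)
    case (r_into_trancl c d)
    then show ?case by (cases rule: CC_gen_cases) auto
  next
    case (trancl_into_trancl c d d')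
    have "leq X (snd c) (snd d)" "leq X (snd d) (snd d')"
      using CC_leq_snd[OF assms(1)] CC_gen_snd[OF assms(1)] trancl_into_trancl(1,2)
      by (auto simp: leq_CC)
    then have "snd d = snd c" using es_antisym[OF assms(1)] trancl_into_trancl(4) by metis
    with trancl_into_trancl(2,3,4) show ?case by (cases rule: CC_gen_cases) auto
  qed
qed

lemma CC_leq_antisym:
  assumes "es X" "leq (CC X) c d" "leq (CC X) d c" shows "c = d"
proof (rule ccontr)
  assume "c \<noteq> d"
  have "snd c = snd d" using CC_leq_snd[OF assms(1)] assms(2,3) es_antisym[OF assms(1)] by blast
  then have "pol (CC X) c" "pol (CC X) d" "fst c \<noteq> fst d"
    using CC_leq_same_snd[OF assms(1,2)] CC_leq_same_snd[OF assms(1,3)] \<open>c \<noteq> d\<close>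
    by (auto simp: prod_eq_iff)
  moreover have "fst c \<in> {1,2}" "fst d \<in> {1,2}"
    using CC_leq_ev[OF assms(1,2)] by (auto simp: ev_CC)
  ultimately show False using \<open>snd c = snd d\<close> by (cases c; cases d) auto
qed

lemma es_CC:
  assumes "es X" shows "es (CC X)"
proof (rule esI)
  show "leq (CC X) c d \<Longrightarrow> c \<in> ev (CC X) \<and> d \<in> ev (CC X)" for c d
    using CC_leq_ev[OF assms] by blast
  show "c \<in> ev (CC X) \<Longrightarrow> leq (CC X) c c" for c
    by (rule CC_leq_refl[OF assms])
  show "leq (CC X) c d \<Longrightarrow> leq (CC X) d e \<Longrightarrow> leq (CC X) c e" for c d e
    by (simp add: leq_CC)
  show "leq (CC X) c d \<Longrightarrow> leq (CC X) d c \<Longrightarrow> c = d" for c d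
    by (rule CC_leq_antisym[OF assms])
  show "finite {c. leq (CC X) c e}" if "e \<in> ev (CC X)" for e
  proof (rule finite_subset)
    show "{c. leq (CC X) c e} \<subseteq> {1,2} \<times> {a. leq X a (snd e)}"
    proof
      fix c assume "c \<in> {c. leq (CC X) c e}"
      then have "leq X (snd c) (snd e)" "c \<in> ev (CC X)"
        using CC_leq_snd[OF assms] CC_leq_ev(1)[OF assms] by auto
      then show "c \<in> {1,2} \<times> {a. leq X a (snd e)}" by (cases c) (simp add: ev_CC)
    qed
    show "finite ({1,2} \<times> {a. leq X a (snd e)})"
      using that es_finite_causes[OF assms] by (auto simp: ev_CC)
  qed
  show "Y \<in> con (CC X) \<Longrightarrow> finite Y \<and> Y \<subseteq> ev (CC X)" for Y
    by (simp add: con_CC ev_CC)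
  show "{} \<in> con (CC X)"
    using es_con_empty[OF assms] by (simp add: con_CC down_closure_def side_def)
  show "Z \<in> con (CC X)" if Y: "Y \<in> con (CC X)" and Z: "Z \<subseteq> Y" for Y Z
  proof -
    have sub: "down_closure (CC X) Z \<subseteq> down_closure (CC X) Y"
      using Z unfolding down_closure_def by blast
    then have "side i (down_closure (CC X) Z) \<subseteq> side i (down_closure (CC X) Y)" for i
      by auto
    then have "side i (down_closure (CC X) Z) \<in> con X" if "i = 1 \<or> i = 2" for i
      using that Y es_con_subset[OF assms] by (auto simp: con_CC)
    moreover have "finite Z" using Y Z finite_subset by (auto simp: con_CC)
    ultimately show ?thesis using Y Z sub by (auto simp: con_CC)
  qed
  show "{c} \<in> con (CC X)" if "c \<in> ev (CC X)" for c
  proof -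
    have a: "snd c \<in> ev X" using that by (auto simp: ev_CC)
    have "side i (down_closure (CC X) {c}) \<subseteq> hist X (snd c)" for i
      using CC_leq_snd[OF assms] unfolding hist_def down_closure_def by fastforce
    then have "side i (down_closure (CC X) {c}) \<in> con X" for i
      using es_con_subset[OF assms configD(3)[OF hist_config[OF assms a]]] by blast
    moreover have "down_closure (CC X) {c} \<subseteq> ev (CC X)"
      using CC_leq_ev[OF assms] unfolding down_closure_def by blast
    ultimately show ?thesis using that by (simp add: con_CC ev_CC)
  qed
  show "insert c Y \<in> con (CC X)" if a: "Y \<in> con (CC X)" "d \<in> Y" "leq (CC X) c d" for Y c d
  proof -
    have "down_closure (CC X) (insert c Y) = down_closure (CC X) Y"
      using a(2,3) tranclp_trans[of "CC_gen X" _ c d] unfolding down_closure_def leq_CC by blast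
    then show ?thesis using a CC_leq_ev[OF assms a(3)] by (simp add: con_CC ev_CC)
  qed
qed

lemma tranclp_down_closed:
  assumes "tranclp R c d" "\<And>u v. R u v \<Longrightarrow> v \<in> x \<Longrightarrow> u \<in> x" "d \<in> x"
  shows "c \<in> x"
  using assms(1,3) by (induction rule: tranclp.induct) (use assms(2) in blast)+

lemma CC_gen_closed_iff:
  assumes "x \<subseteq> ev (CC X)"
  shows "(\<forall>d\<in>x. \<forall>c. CC_gen X c d \<longrightarrow> c \<in> x) \<longleftrightarrow>
     (\<forall>i\<in>{1,2}. \<forall>a\<in>side i x. \<forall>b. leq X b a \<longrightarrow> b \<in> side i x) \<and>
     (\<forall>a. (2, a) \<in> x \<and> pol X a \<longrightarrow> (1, a) \<in> x) \<and> (\<forall>a. (1, a) \<in> x \<and> \<not> pol X a \<longrightarrow> (2, a) \<in> x)"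
    (is "?gen \<longleftrightarrow> ?sides \<and> ?pos \<and> ?neg")
proof
  assume ?gen
  then have gen: "c \<in> x" if "CC_gen X c d" "d \<in> x" for c d using that by blast
  have ev: "a \<in> ev X" if "(i, a) \<in> x" for i a using that assms by (auto simp: ev_CC)
  show "?sides \<and> ?pos \<and> ?neg"
  proof (intro conjI ballI allI impI)
    show "b \<in> side i x" if "i \<in> {1,2}" "a \<in> side i x" "leq X b a" for i a b
    proof -
      have "CC_gen X (i, b) (i, a)" using that(1,3) unfolding CC_gen_def by simp
      then show ?thesis using gen that(2) by simp
    qed
    show "(1, a) \<in> x" if "(2, a) \<in> x \<and> pol X a" for a
    proof -
      have "CC_gen X (1, a) (2, a)" using that ev[of 2 a] unfolding CC_gen_def by simp
      then show ?thesis using gen that by blast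
    qed
    show "(2, a) \<in> x" if "(1, a) \<in> x \<and> \<not> pol X a" for a
    proof -
      have "CC_gen X (2, a) (1, a)" using that ev[of 1 a] unfolding CC_gen_def by simp
      then show ?thesis using gen that by blast
    qed
  qed
next
  assume "?sides \<and> ?pos \<and> ?neg"
  then have sides: ?sides and pos: ?pos and neg: ?neg by blast+
  show ?gen
  proof (intro ballI allI impI)
    fix d c assume "CC_gen X c d" "d \<in> x"
    then show "c \<in> x"
    proof (cases rule: CC_gen_cases)
      case (order i a b)
      then have "b \<in> side i x" using \<open>d \<in> x\<close> by simp
      then have "a \<in> side i x" using sides order(3,4) by blast
      then show ?thesis using order(1) by simp
    qed (use pos neg \<open>d \<in> x\<close> in blast)+
  qed
qed

lemma config_CC:
  assumes "es X"
  shows "config (CC X) x \<longleftrightarrow> finite x \<and> x \<subseteq> ev (CC X) \<and>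
     config X (side 1 x) \<and> config X (side 2 x) \<and>
     (\<forall>a. (2, a) \<in> x \<and> pol X a \<longrightarrow> (1, a) \<in> x) \<and> (\<forall>a. (1, a) \<in> x \<and> \<not> pol X a \<longrightarrow> (2, a) \<in> x)"
    (is "_ \<longleftrightarrow> _ \<and> _ \<and> ?cfg1 \<and> ?cfg2 \<and> ?pos \<and> ?neg")
proof (cases "finite x \<and> x \<subseteq> ev (CC X)")
  case True
  then have x: "finite x" "x \<subseteq> ev (CC X)" by auto
  let ?closed = "\<forall>d\<in>x. \<forall>c. leq (CC X) c d \<longrightarrow> c \<in> x"
  let ?closed_side = "\<lambda>i. \<forall>a\<in>side i x. \<forall>b. leq X b a \<longrightarrow> b \<in> side i x"
  have "?closed \<longleftrightarrow> (\<forall>d\<in>x. \<forall>c. CC_gen X c d \<longrightarrow> c \<in> x)"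
    unfolding leq_CC using tranclp_down_closed[of "CC_gen X" _ _ x] by blast
  then have closed: "?closed \<longleftrightarrow> ?closed_side 1 \<and> ?closed_side 2 \<and> ?pos \<and> ?neg"
    using CC_gen_closed_iff[OF x(2)] by simp
  have cfg_side: "config X (side i x) \<longleftrightarrow> side i x \<in> con X \<and> ?closed_side i" for i
  proof -
    have "side i x \<subseteq> snd ` x" by (force simp: image_iff)
    then have "finite (side i x)" "side i x \<subseteq> ev X" using x finite_subset by (fastforce simp: ev_CC)+
    then show ?thesis unfolding config_def by blast
  qed
  have "down_closure (CC X) x = x" if ?closed
    using that CC_leq_refl[OF assms] x(2) unfolding down_closure_def by blast
  then have con: "x \<in> con (CC X) \<longleftrightarrow> side 1 x \<in> con X \<and> side 2 x \<in> con X" if ?closed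
    using that x by (simp add: con_CC ev_CC)
  have "config (CC X) x \<longleftrightarrow> x \<in> con (CC X) \<and> ?closed"
    using x unfolding config_def by blast
  also have "\<dots> \<longleftrightarrow> ?cfg1 \<and> ?cfg2 \<and> ?pos \<and> ?neg"
    unfolding cfg_side using closed con by blast
  finally show ?thesis using x by blast
qed (auto simp: config_def con_CC)

lemma side_image_CCmap: "side i (CCmap f ` x) = f ` side i x"
  by (force simp: image_iff CCmap_def)

lemma inj_on_CCmap:
  assumes x: "x \<subseteq> ev (CC X)" and inj: "inj_on f (side 1 x)" "inj_on f (side 2 x)"
  shows "inj_on (CCmap f) x"
proof (rule inj_onI)
  fix c d assume cd: "c \<in> x" "d \<in> x" "CCmap f c = CCmap f d"
  obtain i a j b where c: "c = (i, a)" "i = 1 \<or> i = 2" and d: "d = (j, b)"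
    using cd(1,2) x by (cases c, cases d) (auto simp: ev_CC)
  have ij: "i = j" "f a = f b" using cd(3) c d by auto
  have "a \<in> side i x" "b \<in> side i x" using cd c d ij by auto
  then have "a = b" using inj c(2) ij(2) by (auto dest: inj_onD)
  then show "c = d" using c d ij by simp
qed

lemma esp_map_CCmap:
  assumes "es X" "es Y" "esp_map X Y f"
  shows "esp_map (CC X) (CC Y) (CCmap f)"
  unfolding esp_map_def
proof (intro conjI ballI allI impI)
  fix c assume "c \<in> ev (CC X)"
  then obtain i a where c: "c = (i, a)" "i = 1 \<or> i = 2" "a \<in> ev X" by (auto simp: ev_CC)
  then show "CCmap f c \<in> ev (CC Y)" "pol (CC Y) (CCmap f c) = pol (CC X) c"
    using esp_mapD(1,2)[OF assms(3)] by (auto simp: ev_CC)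
next
  fix x assume "config (CC X) x"
  then have x: "finite x" "x \<subseteq> ev (CC X)" "config X (side 1 x)" "config X (side 2 x)"
    and pos: "\<And>a. (2, a) \<in> x \<Longrightarrow> pol X a \<Longrightarrow> (1, a) \<in> x"
    and neg: "\<And>a. (1, a) \<in> x \<Longrightarrow> \<not> pol X a \<Longrightarrow> (2, a) \<in> x"
    unfolding config_CC[OF assms(1)] by blast+
  have ev: "a \<in> ev X" if "(i, a) \<in> x" for i a using that x(2) by (auto simp: ev_CC)
  have pol: "pol Y (f a) = pol X a" if "(i, a) \<in> x" for i a using esp_mapD(2)[OF assms(3) ev[OF that]] .
  show "config (CC Y) (CCmap f ` x)"
    unfolding config_CC[OF assms(2)]
  proof (intro conjI allI impI)
    show "finite (CCmap f ` x)" using x(1) by simp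
    show "CCmap f ` x \<subseteq> ev (CC Y)" using x(2) esp_mapD(1)[OF assms(3)] by (force simp: ev_CC)
    show "config Y (side 1 (CCmap f ` x))" "config Y (side 2 (CCmap f ` x))"
      using esp_mapD(3)[OF assms(3) x(3)] esp_mapD(3)[OF assms(3) x(4)]
      by (simp_all add: side_image_CCmap)
    show "(1, b) \<in> CCmap f ` x" if b: "(2, b) \<in> CCmap f ` x \<and> pol Y b" for b
    proof -
      obtain a where a: "(2, a) \<in> x" "b = f a" using b by (force simp: CCmap_def)
      then have "(1, a) \<in> x" using pos b pol by blast
      then show ?thesis using a by force
    qed
    show "(2, b) \<in> CCmap f ` x" if b: "(1, b) \<in> CCmap f ` x \<and> \<not> pol Y b" for b
    proof -
      obtain a where a: "(1, a) \<in> x" "b = f a" using b by (force simp: CCmap_def)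
      then have "(2, a) \<in> x" using neg b pol by blast
      then show ?thesis using a by force
    qed
  qed
  show "inj_on (CCmap f) x"
    using inj_on_CCmap[OF x(2) esp_mapD(4)[OF assms(3) x(3)] esp_mapD(4)[OF assms(3) x(4)]] .
qed

lemma side_image: "side i (q ` z) = (snd \<circ> q) ` {e \<in> z. fst (q e) = i}"
proof (intro set_eqI iffI)
  fix a assume "a \<in> side i (q ` z)"
  then obtain e where "e \<in> z" "q e = (i, a)" by auto
  then show "a \<in> (snd \<circ> q) ` {e \<in> z. fst (q e) = i}" by (simp add: image_iff) (metis fst_conv snd_conv)
next
  fix a assume "a \<in> (snd \<circ> q) ` {e \<in> z. fst (q e) = i}"
  then obtain e where "e \<in> z" "fst (q e) = i" "a = snd (q e)" by auto
  then have "q e = (i, a)" by (simp add: prod_eq_iff)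
  then show "a \<in> side i (q ` z)" using \<open>e \<in> z\<close> by (metis imageI side_iff)
qed

lemma side_subset_snd_image: "side i Y \<subseteq> snd ` Y"
  by (force simp: image_iff)

text \<open>The events of Q sent by q to side i of CC X, with polarities reversed on the dual
  side 1, so that snd \<circ> q becomes a map of esps into X.\<close>

definition cc_part :: "'q esp \<Rightarrow> ('q \<Rightarrow> nat \<times> 'x) \<Rightarrow> nat \<Rightarrow> 'q esp" where
  "cc_part Q q i = subesp Q {e \<in> ev Q. fst (q e) = i} (\<lambda>e. if i = 1 then \<not> pol Q e else pol Q e)"

lemma ev_cc_part: "ev (cc_part Q q i) = {e \<in> ev Q. fst (q e) = i}"
  unfolding cc_part_def by auto

lemma es_cc_part: "es Q \<Longrightarrow> es (cc_part Q q i)"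
  unfolding cc_part_def by (rule es_subesp)

lemma esp_map_cc_part:
  assumes Q: "es Q" and X: "es X" and q: "esp_map Q (CC X) q" and i: "i = 1 \<or> i = 2"
  shows "esp_map (cc_part Q q i) X (snd \<circ> q)"
  unfolding esp_map_def
proof (intro conjI ballI allI impI)
  fix e assume "e \<in> ev (cc_part Q q i)"
  then have e: "e \<in> ev Q" "fst (q e) = i" by (auto simp: ev_cc_part)
  obtain a where qe: "q e = (i, a)" "a \<in> ev X"
    using esp_mapD(1)[OF q e(1)] e(2) by (cases "q e") (auto simp: ev_CC)
  show "(snd \<circ> q) e \<in> ev X" using qe by simp
  show "pol X ((snd \<circ> q) e) = pol (cc_part Q q i) e"
    using esp_mapD(2)[OF q e(1)] qe i by (auto simp: cc_part_def)
next
  let ?S = "{e \<in> ev Q. fst (q e) = i}"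
  fix x assume "config (cc_part Q q i) x"
  then have x: "x \<subseteq> ev Q" "x \<subseteq> ?S" "x \<in> con Q"
    and x_closed: "\<And>e e'. e \<in> x \<Longrightarrow> leq Q e' e \<Longrightarrow> e' \<in> ?S \<Longrightarrow> e' \<in> x"
    unfolding cc_part_def config_subesp by auto
  let ?y = "down_closure Q x"
  have y: "config Q ?y" using config_down_closure[OF Q x(3)] .
  have xy: "x \<subseteq> ?y" unfolding down_closure_def using x(1) es_refl[OF Q] by blast
  have qy: "config (CC X) (q ` ?y)" "inj_on q ?y" using esp_mapD(3,4)[OF q y] by auto
  have "{e \<in> ?y. fst (q e) = i} = x"
  proof
    show "{e \<in> ?y. fst (q e) = i} \<subseteq> x"
    proof
      fix d assume d: "d \<in> {e \<in> ?y. fst (q e) = i}"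
      then obtain e where e: "e \<in> x" "leq Q d e" unfolding down_closure_def by blast
      have "d \<in> ?S" using d es_leq_ev(1)[OF Q e(2)] by simp
      then show "d \<in> x" using x_closed e by blast
    qed
    show "x \<subseteq> {e \<in> ?y. fst (q e) = i}" using xy x(2) by blast
  qed
  then have "side i (q ` ?y) = (snd \<circ> q) ` x" by (simp add: side_image)
  moreover have "config X (side i (q ` ?y))" using qy(1) i unfolding config_CC[OF X] by blast
  ultimately show "config X ((snd \<circ> q) ` x)" by simp
  show "inj_on (snd \<circ> q) x"
  proof (rule inj_onI)
    fix e e' assume a: "e \<in> x" "e' \<in> x" "(snd \<circ> q) e = (snd \<circ> q) e'"
    have "fst (q e) = i" "fst (q e') = i" using a x(2) by auto
    then have "q e = q e'" using a(3) by (simp add: prod_eq_iff)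
    then show "e = e'" using qy(2) a xy by (meson inj_onD subsetD)
  qed
qed

text \<open>Since f preserves polarity, a and a' have the same polarity, and the links between
  the two sides of CC X then put both of them on one side, where f is injective.\<close>

lemma CC_config_cross_inj:
  assumes X: "es X" and x: "config (CC X) x" and f: "esp_map X Y f"
    and i: "i \<in> {1,2}" "i' = 3 - i" and a: "a \<in> side i x" "a' \<in> side i' x" "f a = f a'"
  shows "a = a'"
proof -
  have c: "config X (side 1 x)" "config X (side 2 x)" and sub: "x \<subseteq> ev (CC X)"
    and pos: "\<And>a. (2, a) \<in> x \<Longrightarrow> pol X a \<Longrightarrow> (1, a) \<in> x"
    and neg: "\<And>a. (1, a) \<in> x \<Longrightarrow> \<not> pol X a \<Longrightarrow> (2, a) \<in> x"
    using x unfolding config_CC[OF X] by blast+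
  have ev: "a \<in> ev X" "a' \<in> ev X" using a(1,2) sub by (auto simp: ev_CC)
  have pol: "pol X a = pol X a'" using esp_mapD(2)[OF f ev(1)] esp_mapD(2)[OF f ev(2)] a(3) by simp
  have "a \<in> side k x \<and> a' \<in> side k x" if "k = (if pol X a then 1 else 2)" for k
    using that i a(1,2) pos neg pol by (cases "i = 1") auto
  then have "a \<in> side 1 x \<and> a' \<in> side 1 x \<or> a \<in> side 2 x \<and> a' \<in> side 2 x" by (metis)
  then show ?thesis using esp_mapD(4)[OF f c(1)] esp_mapD(4)[OF f c(2)] a(3) by (auto dest: inj_onD)
qed

section \<open>Causal structure of a pullback\<close>

lemma hist_down_closed: "es E \<Longrightarrow> \<forall>e\<in>hist E s. \<forall>e'. leq E e' e \<longrightarrow> e' \<in> hist E s"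
  unfolding hist_def by (blast intro: es_trans)

lemma esp_map_lift_cause:
  assumes "es P" "esp_map P Z u" "s \<in> ev P" "leq Z a (u s)"
  shows "\<exists>v\<in>hist P s. u v = a"
proof -
  have c: "config Z (u ` hist P s)" using esp_mapD(3)[OF assms(2) hist_config[OF assms(1,3)]] .
  have "u s \<in> u ` hist P s" using hist_self[OF assms(1,3)] by blast
  then have "a \<in> u ` hist P s" using configD(4)[OF c] assms(4) by blast
  then show ?thesis by auto
qed

context
  fixes A :: "'a esp" and B :: "'b esp" and C :: "'c esp" and f :: "'a \<Rightarrow> 'c" and g :: "'b \<Rightarrow> 'c"
    and P :: "'p esp" and p1 :: "'p \<Rightarrow> 'a" and p2 :: "'p \<Rightarrow> 'b"
  assumes es_A: "es A" and es_B: "es B" and f_map: "esp_map A C f" and g_map: "esp_map B C g"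
    and pullback: "is_pullback TYPE('q) A B C f g P p1 p2"
begin

lemma es_P: "es P" and p1_map: "esp_map P A p1" and p2_map: "esp_map P B p2"
  and p_comm: "e \<in> ev P \<Longrightarrow> f (p1 e) = g (p2 e)"
  using is_pullbackD[OF pullback] by blast+

text \<open>If s' \<noteq> s, the inclusion of hist P s and its variant sending s to s' would be two
  distinct mediating maps.\<close>

lemma pullback_event_rigid:
  fixes j :: "'p \<Rightarrow> 'q"
  assumes j: "inj_on j (hist P s)" and s: "s \<in> ev P" "s' \<in> ev P"
    and pr: "p1 s' = p1 s" "p2 s' = p2 s"
    and ns: "s' \<notin> strict_hist P s" and cfg: "config P (insert s' (strict_hist P s))"
  shows "s' = s"
proof -
  let ?H = "hist P s"
  let ?T = "subesp P ?H (pol P)"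
  have dc: "\<forall>e\<in>?H. \<forall>e'. leq P e' e \<longrightarrow> e' \<in> ?H" using hist_down_closed[OF es_P] .
  have cone: "es ?T" "inj_on j (ev ?T)" "esp_map ?T A p1" "esp_map ?T B p2"
    "\<forall>e\<in>ev ?T. f (p1 e) = g (p2 e)"
    using es_subesp[OF es_P] j esp_map_subesp[OF p1_map dc] esp_map_subesp[OF p2_map dc] p_comm
    by (auto intro: inj_on_subset)
  have incl: "esp_map ?T P id"
    unfolding esp_map_def using config_subesp_down_closed[OF dc] by auto
  define \<beta> where "\<beta> = (\<lambda>r. if r = s then s' else r)"
  have sH: "s \<in> ?H" using hist_self[OF es_P s(1)] .
  have "config P (\<beta> ` x) \<and> inj_on \<beta> x" if "config ?T x" for x
  proof -
    have x: "config P x" "x \<subseteq> ?H" using config_subesp_down_closed[OF dc] that by auto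
    show ?thesis
    proof (cases "s \<in> x")
      case True
      then have "x = ?H" using hist_subset_config[OF x(1)] x(2) by blast
      then have "\<beta> ` x = insert s' (strict_hist P s)" "inj_on \<beta> x"
        unfolding \<beta>_def strict_hist_def inj_on_def using sH ns unfolding strict_hist_def by auto
      then show ?thesis using cfg by simp
    next
      case False
      then have "\<beta> ` x = x" "inj_on \<beta> x" unfolding \<beta>_def inj_on_def by auto
      then show ?thesis using x(1) by simp
    qed
  qed
  moreover have "\<beta> e \<in> ev P \<and> pol P (\<beta> e) = pol ?T e" if "e \<in> ev ?T" for e
    using that s esp_mapD(2)[OF p1_map s(1)] esp_mapD(2)[OF p1_map s(2)] pr(1)
    unfolding \<beta>_def by auto
  ultimately have \<beta>_map: "esp_map ?T P \<beta>" unfolding esp_map_def by blast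
  have "\<forall>e\<in>ev ?T. p1 (\<beta> e) = p1 e \<and> p2 (\<beta> e) = p2 e" unfolding \<beta>_def using pr by auto
  then have "id s = \<beta> s"
    using pullback_mediator_unique[OF pullback cone incl _ \<beta>_map, where e = s] sH s(1) by simp
  then show ?thesis unfolding \<beta>_def by simp
qed

definition link :: "'p \<Rightarrow> 'p \<Rightarrow> bool" where
  "link u v \<longleftrightarrow> leq P u v \<and> (leq A (p1 u) (p1 v) \<or> leq B (p2 u) (p2 v))"

lemma link_star_leq:
  assumes "link\<^sup>*\<^sup>* x y" "y \<in> ev P"
  shows "leq P x y"
  using assms
proof (induction rule: converse_rtranclp_induct)
  case base
  then show ?case using es_refl[OF es_P] by simp
next
  case (step u v)
  then show ?case using es_trans[OF es_P] unfolding link_def by blast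
qed

definition link_hist :: "'p \<Rightarrow> 'p esp" where
  "link_hist t = \<lparr>ev = hist P t, leq = (\<lambda>x y. x \<in> hist P t \<and> y \<in> hist P t \<and> link\<^sup>*\<^sup>* x y),
     con = Pow (hist P t), pol = pol P\<rparr>"

lemma link_hist_simps [simp]:
  "ev (link_hist t) = hist P t"
  "leq (link_hist t) x y = (x \<in> hist P t \<and> y \<in> hist P t \<and> link\<^sup>*\<^sup>* x y)"
  "con (link_hist t) = Pow (hist P t)"
  "pol (link_hist t) = pol P"
  unfolding link_hist_def by simp_all

lemma es_link_hist:
  assumes "t \<in> ev P" shows "es (link_hist t)"
proof (rule esI)
  have fin: "finite (hist P t)" using finite_hist[OF es_P assms] .
  show "x = y" if "leq (link_hist t) x y" "leq (link_hist t) y x" for x y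
  proof -
    have "x \<in> ev P" "y \<in> ev P" using that hist_subset_ev[OF es_P] by auto
    then show ?thesis using that link_star_leq es_antisym[OF es_P] by simp
  qed
  show "leq (link_hist t) x y \<Longrightarrow> leq (link_hist t) y z \<Longrightarrow> leq (link_hist t) x z" for x y z
    by (simp, meson rtranclp_trans)
  show "finite {e'. leq (link_hist t) e' e}" for e
    using fin by (simp add: finite_subset[of _ "hist P t"] subset_iff)
  show "X \<in> con (link_hist t) \<Longrightarrow> finite X \<and> X \<subseteq> ev (link_hist t)" for X
    using fin by (auto intro: finite_subset)
qed auto

lemma hist_config_link_hist:
  assumes "t \<in> ev P" "s \<in> hist P t"
  shows "config (link_hist t) (hist P s)"
proof (rule configI)
  have s: "s \<in> ev P" using assms(2) hist_subset_ev[OF es_P] by blast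
  show "finite (hist P s)" using finite_hist[OF es_P s] .
  show "hist P s \<subseteq> ev (link_hist t)" using hist_subset_hist[OF es_P assms(2)] by simp
  then show "hist P s \<in> con (link_hist t)" by simp
  fix e e' assume e: "e \<in> hist P s" "leq (link_hist t) e' e"
  have "e \<in> ev P" using e(1) hist_subset_ev[OF es_P] by blast
  then have "leq P e' e" using e(2) link_star_leq by simp
  then show "e' \<in> hist P s" using e(1) hist_down_closed[OF es_P] by blast
qed

lemma esp_map_link_hist:
  assumes t: "t \<in> ev P" and Z: "es Z" and u: "esp_map P Z u"
    and lk: "\<And>s s'. leq P s' s \<Longrightarrow> leq Z (u s') (u s) \<Longrightarrow> link s' s"
  shows "esp_map (link_hist t) Z u"
  unfolding esp_map_def
proof (intro conjI ballI allI impI)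
  let ?H = "hist P t"
  have Hev: "?H \<subseteq> ev P" using hist_subset_ev[OF es_P] .
  show "u e \<in> ev Z" "pol Z (u e) = pol (link_hist t) e" if "e \<in> ev (link_hist t)" for e
    using esp_mapD(1,2)[OF u] that Hev by auto
  fix x assume x: "config (link_hist t) x"
  have xH: "x \<subseteq> ?H" "finite x" using configD(1,2)[OF x] by auto
  have uH: "config Z (u ` ?H)" "inj_on u ?H" using esp_mapD(3,4)[OF u hist_config[OF es_P t]] by auto
  show "inj_on u x" using inj_on_subset[OF uH(2) xH(1)] .
  show "config Z (u ` x)"
  proof (rule configI)
    show "finite (u ` x)" using xH by simp
    show "u ` x \<subseteq> ev Z" using configD(2)[OF uH(1)] xH by blast
    show "u ` x \<in> con Z" using es_con_subset[OF Z configD(3)[OF uH(1)]] xH by blast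
    fix a a' assume a: "a \<in> u ` x" "leq Z a' a"
    then obtain s where s: "s \<in> x" "a = u s" by blast
    have sH: "s \<in> ?H" using s xH by blast
    obtain s' where s': "s' \<in> hist P s" "u s' = a'"
      using esp_map_lift_cause[OF es_P u _ a(2)[unfolded s(2)]] sH Hev by blast
    have "link s' s" using lk s' a(2) s(2) unfolding hist_def by auto
    moreover have "s' \<in> ?H" using hist_subset_hist[OF es_P sH] s'(1) by blast
    ultimately have "leq (link_hist t) s' s" using sH by simp
    then have "s' \<in> x" using configD(4)[OF x s(1)] by blast
    then show "a' \<in> u ` x" using s' by blast
  qed
qed

lemma link_hist_mediator_id:
  fixes j :: "'p \<Rightarrow> 'q"
  assumes j: "inj_on j (hist P t)" and t: "t \<in> ev P"
    and h: "esp_map (link_hist t) P h" "\<forall>e\<in>hist P t. p1 (h e) = p1 e \<and> p2 (h e) = p2 e"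
    and s: "s \<in> hist P t"
  shows "h s = s"
proof -
  have "s \<in> ev P" using s hist_subset_ev[OF es_P] by blast
  with es_P show ?thesis using s
  proof (induction s rule: es_causal_induct)
    case (step s)
    have IH: "h r = r" if "r \<in> strict_hist P s" for r
      using step(2)[OF that] that hist_subset_hist[OF es_P step(3)] unfolding strict_hist_def by blast
    have hc: "config P (h ` hist P s)" "inj_on h (hist P s)"
      using esp_mapD(3,4)[OF h(1) hist_config_link_hist[OF t step(3)]] by auto
    have "h ` hist P s = insert (h s) (strict_hist P s)"
      using hist_insert_strict_hist[OF es_P step(1)] IH by (metis image_cong image_ident image_insert)
    moreover have "h s \<notin> strict_hist P s"
    proof
      assume "h s \<in> strict_hist P s"
      then have "h (h s) = h s" "h s \<noteq> s" "h s \<in> hist P s" using IH unfolding strict_hist_def by auto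
      then show False using hc(2) hist_self[OF es_P step(1)] unfolding inj_on_def by metis
    qed
    moreover have "h s \<in> ev P" using esp_mapD(1)[OF h(1)] step(3) by simp
    moreover have "inj_on j (hist P s)" using inj_on_subset[OF j hist_subset_hist[OF es_P step(3)]] .
    ultimately show "h s = s"
      using pullback_event_rigid[OF _ step(1)] h(2) step(3) hc(1) by auto
  qed
qed

text \<open>Causality in a pullback is generated by the links: the mediating map out of link_hist t
  is the identity, so the down-closure of t for the link order is a configuration of P.\<close>

lemma hist_link_star:
  fixes j :: "'p \<Rightarrow> 'q"
  assumes j: "inj_on j (hist P t)" and t: "t \<in> ev P" and r: "r \<in> hist P t"
  shows "link\<^sup>*\<^sup>* r t"
proof -
  let ?H = "hist P t"
  have m1: "esp_map (link_hist t) A p1"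
    by (rule esp_map_link_hist[OF t es_A p1_map]) (simp add: link_def)
  have m2: "esp_map (link_hist t) B p2"
    by (rule esp_map_link_hist[OF t es_B p2_map]) (simp add: link_def)
  have comm: "\<forall>e\<in>ev (link_hist t). f (p1 e) = g (p2 e)"
    using p_comm hist_subset_ev[OF es_P] by auto
  have jT: "inj_on j (ev (link_hist t))" using j by simp
  obtain h where h: "esp_map (link_hist t) P h" "\<forall>e\<in>?H. p1 (h e) = p1 e \<and> p2 (h e) = p2 e"
    using pullback_mediator_exists[OF pullback es_link_hist[OF t] jT m1 m2 comm] by auto
  let ?L = "{x \<in> ?H. link\<^sup>*\<^sup>* x t}"
  have "config (link_hist t) ?L"
  proof (rule configI)
    show "finite ?L" using finite_hist[OF es_P t] by simp
    show "?L \<subseteq> ev (link_hist t)" by auto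
    then show "?L \<in> con (link_hist t)" by simp
    show "e' \<in> ?L" if "e \<in> ?L" "leq (link_hist t) e' e" for e e'
      using that rtranclp_trans[of link e' e t] by simp
  qed
  moreover have "h ` ?L = id ` ?L"
    by (rule image_cong[OF refl]) (use link_hist_mediator_id[OF j t h] in auto)
  ultimately have "config P ?L" using esp_mapD(3)[OF h(1), of ?L] by simp
  moreover have "t \<in> ?L" using hist_self[OF es_P t] by simp
  ultimately have "?H \<subseteq> ?L" by (rule hist_subset_config)
  then show ?thesis using r by (simp add: subset_iff)
qed

lemma config_proj_inj:
  assumes "config P W" "x \<in> W" "y \<in> W" "p1 x = p1 y \<or> p2 x = p2 y"
  shows "x = y"
  using assms esp_mapD(4)[OF p1_map assms(1)] esp_mapD(4)[OF p2_map assms(1)]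
  by (auto dest: inj_onD)

lemma link_lift:
  assumes W: "config P W" "y \<in> W" and lk: "link y z"
    and z0: "z0 \<in> ev P" "p1 z0 = p1 z" "p2 z0 = p2 z"
  shows "\<exists>v\<in>hist P z0. (v \<in> W \<longrightarrow> v = y) \<and> (p1 v = p1 y \<or> p2 v = p2 y)"
proof -
  have "leq A (p1 y) (p1 z0) \<or> leq B (p2 y) (p2 z0)" using lk z0 unfolding link_def by simp
  then obtain v where "v \<in> hist P z0" "p1 v = p1 y \<or> p2 v = p2 y"
    using esp_map_lift_cause[OF es_P p1_map z0(1)] esp_map_lift_cause[OF es_P p2_map z0(1)]
    by blast
  moreover have "v \<in> W \<longrightarrow> v = y" using config_proj_inj[OF W(1) _ W(2)] calculation(2) by blast
  ultimately show ?thesis by blast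
qed

lemma strict_hist_twin_subset:
  fixes j :: "'p \<Rightarrow> 'q"
  assumes j: "inj_on j (hist P s')" and w': "config P w'" "s' \<in> w'" and s: "s \<in> ev P"
    and pr: "p1 s' = p1 s" "p2 s' = p2 s" and below: "strict_hist P s \<subseteq> w'"
  shows "strict_hist P s' \<subseteq> strict_hist P s"
proof
  fix r assume "r \<in> strict_hist P s'"
  then have r: "r \<in> hist P s'" "r \<noteq> s'" unfolding strict_hist_def by auto
  have s': "s' \<in> ev P" using w' configD(2) by blast
  have "link\<^sup>*\<^sup>* r s'" using hist_link_star[OF j s' r(1)] .
  then have "r \<in> strict_hist P s \<or> r = s'"
  proof (induction rule: converse_rtranclp_induct)
    case base
    then show ?case by simp
  next
    case (step y z)
    have "z \<in> w'" using step.IH below w'(2) by blast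
    then have y: "y \<in> w'" using configD(4)[OF w'(1)] step.hyps(1) unfolding link_def by blast
    define z0 where "z0 = (if z = s' then s else z)"
    have z0: "z0 \<in> hist P s" "p1 z0 = p1 z" "p2 z0 = p2 z"
      using step.IH pr hist_self[OF es_P s] unfolding z0_def strict_hist_def by auto
    have "z0 \<in> ev P" using z0(1) hist_subset_ev[OF es_P] by blast
    then obtain v where v: "v \<in> hist P z0" "v \<in> w' \<longrightarrow> v = y" "p1 v = p1 y \<or> p2 v = p2 y"
      using link_lift[OF w'(1) y step.hyps(1)] z0(2,3) by blast
    have vs: "v \<in> hist P s" using v(1) hist_subset_hist[OF es_P z0(1)] by blast
    show ?case
    proof (cases "v = s")
      case True
      then have "p1 y = p1 s' \<or> p2 y = p2 s'" using v(3) pr by auto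
      then show ?thesis using config_proj_inj[OF w'(1) y w'(2)] by simp
    next
      case False
      then have "v \<in> strict_hist P s" using vs unfolding strict_hist_def by blast
      then show ?thesis using v(2) below by blast
    qed
  qed
  then show "r \<in> strict_hist P s" using r(2) by blast
qed

lemma strict_hist_subset_twin:
  fixes j :: "'p \<Rightarrow> 'q"
  assumes j: "inj_on j (hist P s)" and w: "config P w" "s \<in> w"
    and w': "config P w'" "s' \<in> w'" and pr: "p1 s' = p1 s" "p2 s' = p2 s"
    and below: "strict_hist P s \<subseteq> w'"
  shows "strict_hist P s \<subseteq> strict_hist P s'"
proof
  fix r assume "r \<in> strict_hist P s"
  then have r: "r \<in> hist P s" "r \<noteq> s" unfolding strict_hist_def by auto
  have s: "s \<in> ev P" using w configD(2) by blast
  have "link\<^sup>*\<^sup>* r s" using hist_link_star[OF j s r(1)] .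
  then have "r \<in> strict_hist P s' \<or> r = s"
  proof (induction rule: converse_rtranclp_induct)
    case base
    then show ?case by simp
  next
    case (step y z)
    have "leq P y z" "leq P z s"
      using step.hyps link_star_leq s unfolding link_def by auto
    then have ys: "y \<in> hist P s" unfolding hist_def using es_trans[OF es_P] by blast
    show ?case
    proof (cases "y = s")
      case False
      then have y: "y \<in> w'" using ys below unfolding strict_hist_def by blast
      have "y \<noteq> s'"
      proof
        assume "y = s'"
        then have "s' \<in> w" using ys hist_subset_config[OF w] by blast
        then show False using config_proj_inj[OF w(1) _ w(2)] pr \<open>y = s'\<close> False by blast
      qed
      define z0 where "z0 = (if z = s then s' else z)"
      have z0: "z0 \<in> hist P s'" "p1 z0 = p1 z" "p2 z0 = p2 z"
        using step.IH pr hist_self[OF es_P] w'(2) configD(2)[OF w'(1)]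
        unfolding z0_def strict_hist_def by auto
      have "z0 \<in> ev P" using z0(1) hist_subset_ev[OF es_P] by blast
      then obtain v where v: "v \<in> hist P z0" "v \<in> w' \<longrightarrow> v = y"
        using link_lift[OF w'(1) y step.hyps(1)] z0(2,3) by blast
      have "v \<in> hist P s'" using v(1) hist_subset_hist[OF es_P z0(1)] by blast
      moreover have "v \<in> w'" using calculation hist_subset_config[OF w'] by blast
      ultimately show ?thesis using v(2) \<open>y \<noteq> s'\<close> unfolding strict_hist_def by auto
    qed simp
  qed
  then show "r \<in> strict_hist P s'" using r(2) by blast
qed

lemma pullback_twin_eq:
  fixes j :: "'p \<Rightarrow> 'q"
  assumes j: "inj_on j (w \<union> w')" and w: "config P w" "s \<in> w"
    and w': "config P w'" "s' \<in> w'" and pr: "p1 s' = p1 s" "p2 s' = p2 s"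
    and below: "strict_hist P s \<subseteq> w'"
  shows "s' = s"
proof -
  have s: "s \<in> ev P" and s': "s' \<in> ev P" using w w' configD(2) by blast+
  have js: "inj_on j (hist P s)" and js': "inj_on j (hist P s')"
    using inj_on_subset[OF j] hist_subset_config[OF w] hist_subset_config[OF w'] by blast+
  have eq: "strict_hist P s' = strict_hist P s"
    using strict_hist_twin_subset[OF js' w' s pr below]
      strict_hist_subset_twin[OF js w w' pr below] by blast
  show ?thesis
  proof (rule pullback_event_rigid[OF js s s' pr])
    show "s' \<notin> strict_hist P s" using eq unfolding strict_hist_def by blast
    show "config P (insert s' (strict_hist P s))"
      using hist_config[OF es_P s'] hist_insert_strict_hist[OF es_P s'] eq by simp
  qed
qed

lemma pullback_config_subset:
  fixes j :: "'p \<Rightarrow> 'q"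
  assumes w: "config P w" and w': "config P w'" and j: "inj_on j (w \<union> w')"
    and proj: "p1 ` w \<subseteq> p1 ` w'" "p2 ` w \<subseteq> p2 ` w'"
  shows "w \<subseteq> w'"
proof
  fix s assume "s \<in> w"
  then have "s \<in> ev P" using configD(2)[OF w] by blast
  with es_P show "s \<in> w'" using \<open>s \<in> w\<close>
  proof (induction s rule: es_causal_induct)
    case (step s)
    have below: "strict_hist P s \<subseteq> w'"
      using step(2) hist_subset_config[OF w step(3)] unfolding strict_hist_def by blast
    obtain s1 where s1: "s1 \<in> w'" "p1 s1 = p1 s" using proj(1) step(3) by (metis image_iff subsetD)
    obtain s2 where s2: "s2 \<in> w'" "p2 s2 = p2 s" using proj(2) step(3) by (metis image_iff subsetD)
    have ev: "s1 \<in> ev P" "s2 \<in> ev P" using s1 s2 configD(2)[OF w'] by blast+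
    have "f (p1 s2) = f (p1 s1)" using p_comm[OF ev(2)] p_comm[OF step(1)] p_comm[OF ev(1)] s1 s2 by simp
    moreover have "inj_on f (p1 ` w')" using esp_mapD(4)[OF f_map esp_mapD(3)[OF p1_map w']] .
    ultimately have "p1 s2 = p1 s1" using s1(1) s2(1) by (auto dest: inj_onD)
    then have "s2 = s1" using config_proj_inj[OF w' s2(1) s1(1)] by blast
    then have "s1 = s" using pullback_twin_eq[OF j w step(3) w' s1(1)] s1 s2 below by simp
    then show ?case using s1(1) by simp
  qed
qed

lemma hist_projections_in_config:
  fixes j :: "'p \<Rightarrow> 'q"
  assumes w: "config P w" and w': "config P w'" and j: "inj_on j w" and p: "p \<in> w"
    and proj: "p1 p \<in> p1 ` w'" "p2 p \<in> p2 ` w'"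
    and crossA: "\<forall>a\<in>p1 ` w'. \<forall>a'\<in>p1 ` w. f a = f a' \<longrightarrow> a = a'"
    and crossB: "\<forall>b\<in>p2 ` w'. \<forall>b'\<in>p2 ` w. g b = g b' \<longrightarrow> b = b'"
    and r: "r \<in> hist P p"
  shows "p1 r \<in> p1 ` w' \<and> p2 r \<in> p2 ` w'"
proof -
  have wev: "w \<subseteq> ev P" "w' \<subseteq> ev P" using configD(2)[OF w] configD(2)[OF w'] by auto
  have pev: "p \<in> ev P" using p wev by blast
  have hpw: "hist P p \<subseteq> w" using hist_subset_config[OF w p] .
  have cA: "config A (p1 ` w')" using esp_mapD(3)[OF p1_map w'] .
  have cB: "config B (p2 ` w')" using esp_mapD(3)[OF p2_map w'] .
  have "inj_on j (hist P p)" using inj_on_subset[OF j hpw] .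
  then have "link\<^sup>*\<^sup>* r p" by (rule hist_link_star[OF _ pev r])
  then show ?thesis
  proof (induction rule: converse_rtranclp_induct)
    case base
    then show ?case using proj by simp
  next
    case (step y z)
    have "leq P y z" "leq P z p"
      using step.hyps link_star_leq pev unfolding link_def by auto
    then have "y \<in> hist P p" using es_trans[OF es_P] unfolding hist_def by blast
    then have "y \<in> w" using hpw by blast
    then have yev: "y \<in> ev P" using wev by blast
    from step.hyps(1) have "leq A (p1 y) (p1 z) \<or> leq B (p2 y) (p2 z)" unfolding link_def by simp
    then show ?case
    proof
      assume "leq A (p1 y) (p1 z)"
      then have y1: "p1 y \<in> p1 ` w'" using configD(4)[OF cA] step.IH by blast
      then obtain u where u: "u \<in> w'" "p1 u = p1 y" by (metis imageE)
      have "g (p2 u) = g (p2 y)" using p_comm[of u] p_comm[OF yev] u wev by auto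
      then have "p2 u = p2 y" using crossB u(1) \<open>y \<in> w\<close> by blast
      then show ?thesis using y1 u(1) by (metis imageI)
    next
      assume "leq B (p2 y) (p2 z)"
      then have y2: "p2 y \<in> p2 ` w'" using configD(4)[OF cB] step.IH by blast
      then obtain u where u: "u \<in> w'" "p2 u = p2 y" by (metis imageE)
      have "f (p1 u) = f (p1 y)" using p_comm[of u] p_comm[OF yev] u wev by auto
      then have "p1 u = p1 y" using crossA u(1) \<open>y \<in> w\<close> by blast
      then show ?thesis using y2 u(1) by (metis imageI)
    qed
  qed
qed

lemma pullback_event_in_config:
  fixes j :: "'p \<Rightarrow> 'q"
  assumes w: "config P w" and w': "config P w'" and j: "inj_on j (w \<union> w')" and p: "p \<in> w"
    and proj: "p1 p \<in> p1 ` w'" "p2 p \<in> p2 ` w'"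
    and crossA: "\<forall>a\<in>p1 ` w'. \<forall>a'\<in>p1 ` w. f a = f a' \<longrightarrow> a = a'"
    and crossB: "\<forall>b\<in>p2 ` w'. \<forall>b'\<in>p2 ` w. g b = g b' \<longrightarrow> b = b'"
  shows "p \<in> w'"
proof -
  have pev: "p \<in> ev P" using p configD(2)[OF w] by blast
  have hpw: "hist P p \<subseteq> w" using hist_subset_config[OF w p] .
  have "inj_on j w" using inj_on_subset[OF j] by blast
  then have "p1 r \<in> p1 ` w' \<and> p2 r \<in> p2 ` w'" if "r \<in> hist P p" for r
    using hist_projections_in_config[OF w w' _ p proj crossA crossB that] by blast
  then have "p1 ` hist P p \<subseteq> p1 ` w'" "p2 ` hist P p \<subseteq> p2 ` w'"
    by (simp_all add: image_subset_iff)
  moreover have "inj_on j (hist P p \<union> w')" using inj_on_subset[OF j] hpw by blast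
  ultimately have "hist P p \<subseteq> w'"
    using pullback_config_subset[OF hist_config[OF es_P pev] w'] by blast
  then show ?thesis using hist_self[OF es_P pev] by blast
qed

context
  fixes Q :: "'q esp" and q1 :: "'q \<Rightarrow> nat \<times> 'a" and q2 :: "'q \<Rightarrow> nat \<times> 'b"
  assumes es_Q: "es Q" and q1_map: "esp_map Q (CC A) q1" and q2_map: "esp_map Q (CC B) q2"
    and cone: "\<forall>e\<in>ev Q. CCmap f (q1 e) = CCmap g (q2 e)"
begin

lemma cone_components:
  assumes "e \<in> ev Q" shows "fst (q2 e) = fst (q1 e)" "f (snd (q1 e)) = g (snd (q2 e))"
proof -
  have "CCmap f (q1 e) = CCmap g (q2 e)" using cone assms by blast
  then show "fst (q2 e) = fst (q1 e)" "f (snd (q1 e)) = g (snd (q2 e))"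
    by (cases "q1 e"; cases "q2 e"; simp)+
qed

lemma cone_side: "e \<in> ev Q \<Longrightarrow> fst (q1 e) = 1 \<or> fst (q1 e) = 2"
  using esp_mapD(1)[OF q1_map, of e] by (cases "q1 e") (auto simp: ev_CC)

lemma cc_part_q2: "cc_part Q q2 i = cc_part Q q1 i"
proof -
  have "{e \<in> ev Q. fst (q2 e) = i} = {e \<in> ev Q. fst (q1 e) = i}" using cone_components(1) by auto
  then show ?thesis unfolding cc_part_def by simp
qed

lemma part_mediator_exists:
  assumes "i = 1 \<or> i = 2"
  shows "\<exists>h. esp_map (cc_part Q q1 i) P h \<and>
    (\<forall>e\<in>ev (cc_part Q q1 i). p1 (h e) = snd (q1 e) \<and> p2 (h e) = snd (q2 e))"
proof -
  have "inj_on id (ev (cc_part Q q1 i))" by simp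
  moreover have "esp_map (cc_part Q q1 i) A (snd \<circ> q1)" "esp_map (cc_part Q q1 i) B (snd \<circ> q2)"
    using esp_map_cc_part[OF es_Q es_A q1_map assms] esp_map_cc_part[OF es_Q es_B q2_map assms]
    by (simp_all add: cc_part_q2)
  moreover have "\<forall>e\<in>ev (cc_part Q q1 i). f ((snd \<circ> q1) e) = g ((snd \<circ> q2) e)"
    using cone_components(2) by (simp add: ev_cc_part)
  ultimately show ?thesis
    using pullback_mediator_exists[OF pullback es_cc_part[OF es_Q]] by fastforce
qed

definition part_mediator :: "nat \<Rightarrow> 'q \<Rightarrow> 'p" where
  "part_mediator i = (SOME h. esp_map (cc_part Q q1 i) P h \<and>
    (\<forall>e\<in>ev (cc_part Q q1 i). p1 (h e) = snd (q1 e) \<and> p2 (h e) = snd (q2 e)))"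

lemma part_mediator:
  assumes "i = 1 \<or> i = 2"
  shows "esp_map (cc_part Q q1 i) P (part_mediator i)"
    "\<And>e. e \<in> ev (cc_part Q q1 i) \<Longrightarrow> p1 (part_mediator i e) = snd (q1 e) \<and> p2 (part_mediator i e) = snd (q2 e)"
  using someI_ex[OF part_mediator_exists[OF assms]] unfolding part_mediator_def by blast+

definition cc_mediator :: "'q \<Rightarrow> nat \<times> 'p" where
  "cc_mediator e = (fst (q1 e), part_mediator (fst (q1 e)) e)"

lemma cc_mediator_proj:
  assumes "e \<in> ev Q"
  shows "CCmap p1 (cc_mediator e) = q1 e" "CCmap p2 (cc_mediator e) = q2 e"
  using part_mediator(2)[OF cone_side[OF assms], of e] assms cone_components(1)[OF assms]
  by (auto simp: cc_mediator_def ev_cc_part prod_eq_iff)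

lemma cc_mediator_ev:
  assumes "e \<in> ev Q"
  shows "cc_mediator e \<in> ev (CC P)" "pol (CC P) (cc_mediator e) = pol Q e"
proof -
  let ?i = "fst (q1 e)"
  have e: "e \<in> ev (cc_part Q q1 ?i)" using assms by (simp add: ev_cc_part)
  have m: "esp_map (cc_part Q q1 ?i) P (part_mediator ?i)" using part_mediator(1)[OF cone_side[OF assms]] .
  show "cc_mediator e \<in> ev (CC P)"
    using esp_mapD(1)[OF m e] cone_side[OF assms] by (auto simp: cc_mediator_def ev_CC)
  show "pol (CC P) (cc_mediator e) = pol Q e"
    using esp_mapD(2)[OF m e] cone_side[OF assms] by (auto simp: cc_mediator_def cc_part_def pol_CC)
qed

lemma side_cc_mediator: "side i (cc_mediator ` z) = part_mediator i ` {e \<in> z. fst (q1 e) = i}"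
proof -
  have "side i (cc_mediator ` z) = (snd \<circ> cc_mediator) ` {e \<in> z. fst (q1 e) = i}"
    unfolding side_image by (simp add: cc_mediator_def)
  also have "\<dots> = part_mediator i ` {e \<in> z. fst (q1 e) = i}"
    by (rule image_cong) (auto simp: cc_mediator_def)
  finally show ?thesis .
qed

lemma config_side_cc_mediator:
  assumes z: "config Q z" and i: "i = 1 \<or> i = 2"
  shows "config P (side i (cc_mediator ` z))" "inj_on (part_mediator i) {e \<in> z. fst (q1 e) = i}"
proof -
  let ?zi = "{e \<in> z. fst (q1 e) = i}"
  have "config (cc_part Q q1 i) ?zi"
    using configD[OF z] es_con_subset[OF es_Q configD(3)[OF z]]
    unfolding cc_part_def config_subesp by auto
  then show "config P (side i (cc_mediator ` z))" "inj_on (part_mediator i) ?zi"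
    using esp_mapD(3,4)[OF part_mediator(1)[OF i]] by (simp_all add: side_cc_mediator)
qed

lemma proj_side_cc_mediator:
  assumes z: "config Q z" and i: "i = 1 \<or> i = 2"
  shows "p1 ` side i (cc_mediator ` z) = side i (q1 ` z)"
    "p2 ` side i (cc_mediator ` z) = side i (q2 ` z)"
proof -
  let ?zi = "{e \<in> z. fst (q1 e) = i}"
  have zQ: "z \<subseteq> ev Q" using configD(2)[OF z] .
  have proj: "p1 (part_mediator i e) = snd (q1 e)" "p2 (part_mediator i e) = snd (q2 e)"
    if "e \<in> ?zi" for e
    using part_mediator(2)[OF i, of e] that zQ by (auto simp: ev_cc_part)
  have "p1 ` side i (cc_mediator ` z) = (snd \<circ> q1) ` ?zi"
    unfolding side_cc_mediator image_image by (rule image_cong) (simp_all add: proj)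
  then show "p1 ` side i (cc_mediator ` z) = side i (q1 ` z)" by (simp add: side_image)
  have "{e \<in> z. fst (q2 e) = i} = ?zi" using cone_components(1) zQ by auto
  moreover have "p2 ` side i (cc_mediator ` z) = (snd \<circ> q2) ` ?zi"
    unfolding side_cc_mediator image_image by (rule image_cong) (simp_all add: proj)
  ultimately show "p2 ` side i (cc_mediator ` z) = side i (q2 ` z)" by (simp add: side_image)
qed

lemma inj_on_cc_mediator:
  assumes z: "config Q z" shows "inj_on cc_mediator z"
proof (rule inj_onI)
  fix e e' assume a: "e \<in> z" "e' \<in> z" "cc_mediator e = cc_mediator e'"
  let ?i = "fst (q1 e)"
  have i: "?i = 1 \<or> ?i = 2" using cone_side a(1) configD(2)[OF z] by blast
  have "fst (q1 e') = ?i" "part_mediator ?i e = part_mediator ?i e'"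
    using a(3) unfolding cc_mediator_def by auto
  then show "e = e'"
    using config_side_cc_mediator(2)[OF z i] a(1,2) by (auto dest: inj_onD)
qed

text \<open>Both sides of the image of z are configurations of P, the events of Q provide the
  injection into the test type, and the compatibility of the two sides in CC A and CC B
  provides the cross injectivity needed by pullback_event_in_config.\<close>

lemma cc_mediator_side_transfer:
  assumes z: "config Q z" and i: "i \<in> {1,2}" "i' = 3 - i"
    and p: "p \<in> side i (cc_mediator ` z)" "p1 p \<in> side i' (q1 ` z)" "p2 p \<in> side i' (q2 ` z)"
  shows "p \<in> side i' (cc_mediator ` z)"
proof -
  let ?w = "side i (cc_mediator ` z)" and ?w' = "side i' (cc_mediator ` z)"
  have i': "i' \<in> {1,2}" "i = 3 - i'" using i by auto
  have sides: "i = 1 \<or> i = 2" "i' = 1 \<or> i' = 2" using i by auto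
  have w: "config P ?w" "config P ?w'" using config_side_cc_mediator(1)[OF z sides(1)]
    config_side_cc_mediator(1)[OF z sides(2)] by auto
  have proj1: "p1 ` ?w = side i (q1 ` z)" "p1 ` ?w' = side i' (q1 ` z)"
    and proj2: "p2 ` ?w = side i (q2 ` z)" "p2 ` ?w' = side i' (q2 ` z)"
    using proj_side_cc_mediator[OF z sides(1)] proj_side_cc_mediator[OF z sides(2)] by auto
  have "?w \<union> ?w' \<subseteq> (snd \<circ> cc_mediator) ` z"
    using side_subset_snd_image[of i "cc_mediator ` z"] side_subset_snd_image[of i' "cc_mediator ` z"]
    by (simp add: image_comp)
  then have j: "inj_on (inv_into z (snd \<circ> cc_mediator)) (?w \<union> ?w')" by (rule inj_on_inv_into)
  have cross1: "\<forall>a\<in>p1 ` ?w'. \<forall>a'\<in>p1 ` ?w. f a = f a' \<longrightarrow> a = a'"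
    unfolding proj1 using CC_config_cross_inj[OF es_A esp_mapD(3)[OF q1_map z] f_map i'] by blast
  have cross2: "\<forall>b\<in>p2 ` ?w'. \<forall>b'\<in>p2 ` ?w. g b = g b' \<longrightarrow> b = b'"
    unfolding proj2 using CC_config_cross_inj[OF es_B esp_mapD(3)[OF q2_map z] g_map i'] by blast
  show ?thesis
    using pullback_event_in_config[OF w j p(1) _ _ cross1 cross2] p(2,3) proj1(2) proj2(2) by simp
qed

lemma config_cc_mediator:
  assumes z: "config Q z" shows "config (CC P) (cc_mediator ` z)"
  unfolding config_CC[OF es_P]
proof (intro conjI allI impI)
  have zQ: "z \<subseteq> ev Q" using configD(2)[OF z] .
  show "finite (cc_mediator ` z)" using configD(1)[OF z] by simp
  show "cc_mediator ` z \<subseteq> ev (CC P)" using cc_mediator_ev(1) zQ by blast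
  show "config P (side 1 (cc_mediator ` z))" "config P (side 2 (cc_mediator ` z))"
    using config_side_cc_mediator(1)[OF z] by simp_all
  have A_pos: "\<And>a. (2, a) \<in> q1 ` z \<Longrightarrow> pol A a \<Longrightarrow> (1, a) \<in> q1 ` z"
    and A_neg: "\<And>a. (1, a) \<in> q1 ` z \<Longrightarrow> \<not> pol A a \<Longrightarrow> (2, a) \<in> q1 ` z"
    using esp_mapD(3)[OF q1_map z] unfolding config_CC[OF es_A] by blast+
  have B_pos: "\<And>b. (2, b) \<in> q2 ` z \<Longrightarrow> pol B b \<Longrightarrow> (1, b) \<in> q2 ` z"
    and B_neg: "\<And>b. (1, b) \<in> q2 ` z \<Longrightarrow> \<not> pol B b \<Longrightarrow> (2, b) \<in> q2 ` z"
    using esp_mapD(3)[OF q2_map z] unfolding config_CC[OF es_B] by blast+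
  have proj: "p1 p \<in> side i (q1 ` z)" "p2 p \<in> side i (q2 ` z)"
    "pol A (p1 p) = pol P p" "pol B (p2 p) = pol P p"
    if "p \<in> side i (cc_mediator ` z)" "i = 1 \<or> i = 2" for p i
  proof -
    have "p \<in> ev P" using that config_side_cc_mediator(1)[OF z] configD(2) by blast
    then show "pol A (p1 p) = pol P p" "pol B (p2 p) = pol P p"
      using esp_mapD(2)[OF p1_map] esp_mapD(2)[OF p2_map] by simp_all
    show "p1 p \<in> side i (q1 ` z)" "p2 p \<in> side i (q2 ` z)"
      using imageI[OF that(1), of p1] imageI[OF that(1), of p2] proj_side_cc_mediator[OF z that(2)]
      by simp_all
  qed
  show "(1, p) \<in> cc_mediator ` z" if p: "(2, p) \<in> cc_mediator ` z \<and> pol P p" for p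
  proof -
    have side: "p \<in> side 2 (cc_mediator ` z)" using p by simp
    then have "p1 p \<in> side 1 (q1 ` z)" "p2 p \<in> side 1 (q2 ` z)"
      using proj[of p 2] A_pos B_pos p by simp_all
    then have "p \<in> side 1 (cc_mediator ` z)"
      using cc_mediator_side_transfer[OF z _ _ side] by simp
    then show ?thesis by simp
  qed
  show "(2, p) \<in> cc_mediator ` z" if p: "(1, p) \<in> cc_mediator ` z \<and> \<not> pol P p" for p
  proof -
    have side: "p \<in> side 1 (cc_mediator ` z)" using p by simp
    then have "p1 p \<in> side 2 (q1 ` z)" "p2 p \<in> side 2 (q2 ` z)"
      using proj[of p 1] A_neg B_neg p by simp_all
    then have "p \<in> side 2 (cc_mediator ` z)"
      using cc_mediator_side_transfer[OF z _ _ side] by simp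
    then show ?thesis by simp
  qed
qed

lemma esp_map_cc_mediator: "esp_map Q (CC P) cc_mediator"
  unfolding esp_map_def using cc_mediator_ev config_cc_mediator inj_on_cc_mediator by blast

lemma cc_mediator_unique:
  assumes h: "esp_map Q (CC P) h" "\<forall>e\<in>ev Q. CCmap p1 (h e) = q1 e \<and> CCmap p2 (h e) = q2 e"
    and e: "e \<in> ev Q"
  shows "h e = cc_mediator e"
proof -
  have h_proj: "fst (h e) = fst (q1 e) \<and> p1 (snd (h e)) = snd (q1 e) \<and> p2 (snd (h e)) = snd (q2 e)"
    if "e \<in> ev Q" for e
  proof -
    obtain i a where ha: "h e = (i, a)" by (cases "h e")
    have "CCmap p1 (h e) = q1 e" "CCmap p2 (h e) = q2 e" using h(2) that by blast+
    then have "q1 e = (i, p1 a)" "q2 e = (i, p2 a)" using ha by simp_all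
    then show ?thesis using ha by simp
  qed
  let ?i = "fst (q1 e)"
  have i: "?i = 1 \<or> ?i = 2" using cone_side[OF e] .
  let ?T = "cc_part Q q1 ?i"
  have "cc_part Q h ?i = ?T"
  proof -
    have "{e \<in> ev Q. fst (h e) = ?i} = {e \<in> ev Q. fst (q1 e) = ?i}" using h_proj by auto
    then show ?thesis unfolding cc_part_def by simp
  qed
  then have m_h: "esp_map ?T P (snd \<circ> h)"
    using esp_map_cc_part[OF es_Q es_P h(1) i] by simp
  have tA: "esp_map ?T A (snd \<circ> q1)" and tB: "esp_map ?T B (snd \<circ> q2)"
    using esp_map_cc_part[OF es_Q es_A q1_map i] esp_map_cc_part[OF es_Q es_B q2_map i]
    by (simp_all add: cc_part_q2)
  have comm: "\<forall>e\<in>ev ?T. f ((snd \<circ> q1) e) = g ((snd \<circ> q2) e)"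
    using cone_components(2) by (simp add: ev_cc_part)
  have c_h: "\<forall>e\<in>ev ?T. p1 ((snd \<circ> h) e) = (snd \<circ> q1) e \<and> p2 ((snd \<circ> h) e) = (snd \<circ> q2) e"
    using h_proj by (simp add: ev_cc_part)
  have c_m: "\<forall>e\<in>ev ?T. p1 (part_mediator ?i e) = (snd \<circ> q1) e \<and>
      p2 (part_mediator ?i e) = (snd \<circ> q2) e"
    using part_mediator(2)[OF i] by simp
  have "e \<in> ev ?T" using e by (simp add: ev_cc_part)
  then have "(snd \<circ> h) e = part_mediator ?i e"
    by (rule pullback_mediator_unique[OF pullback es_cc_part[OF es_Q] inj_on_id tA tB comm
          m_h c_h part_mediator(1)[OF i] c_m])
  then show ?thesis using h_proj[OF e] by (simp add: cc_mediator_def prod_eq_iff)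
qed

end

lemma CC_pullback_universal:
  fixes Q :: "'q esp"
  assumes "es Q" "esp_map Q (CC A) q1" "esp_map Q (CC B) q2"
    and "\<forall>e\<in>ev Q. CCmap f (q1 e) = CCmap g (q2 e)"
  shows "\<exists>h. esp_map Q (CC P) h \<and> (\<forall>e\<in>ev Q. CCmap p1 (h e) = q1 e \<and> CCmap p2 (h e) = q2 e) \<and>
           (\<forall>h'. esp_map Q (CC P) h' \<and> (\<forall>e\<in>ev Q. CCmap p1 (h' e) = q1 e \<and> CCmap p2 (h' e) = q2 e)
                 \<longrightarrow> (\<forall>e\<in>ev Q. h' e = h e))"
  using esp_map_cc_mediator[OF assms] cc_mediator_proj[OF assms] cc_mediator_unique[OF assms]
  by blast

end

theorem mainTheorem7:
  fixes A :: "'a esp" and B :: "'b esp" and C :: "'c esp" and P :: "'p esp"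
    and f :: "'a \<Rightarrow> 'c" and g :: "'b \<Rightarrow> 'c" and p1 :: "'p \<Rightarrow> 'a" and p2 :: "'p \<Rightarrow> 'b"
  assumes "es A" and "es B" and "es C"
    and "esp_map A C f" and "esp_map B C g"
    and "is_pullback TYPE('q) A B C f g P p1 p2"
  shows "is_pullback TYPE('q) (CC A) (CC B) (CC C) (CCmap f) (CCmap g)
           (CC P) (CCmap p1) (CCmap p2)"
proof -
  note P = is_pullbackD[OF assms(6)]
  have "\<forall>e\<in>ev (CC P). CCmap f (CCmap p1 e) = CCmap g (CCmap p2 e)"
    using P(4) by (auto simp: ev_CC)
  then show ?thesis
    unfolding is_pullback_def
    using es_CC[OF P(1)] esp_map_CCmap[OF P(1) assms(1) P(2)] esp_map_CCmap[OF P(1) assms(2) P(3)]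
      CC_pullback_universal[OF assms(1,2,4,5,6)]
    by blast
qed
end
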